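(* Fix one of the two variants $\sharp\in\{\text{lumped},\text{exact}\}$ described in the context. Let $\vec X^m\in\underline V^h_{\partial_0}$ satisfy assumption $(\mathfrak A)$, and let $\Delta t_m>0$. Then there exists a unique pair $(\delta\vec X^{m+1},\vec\kappa^{m+1})\in\underline V^h_\partial\times[W_\sharp]^2$ such that, with $\vec X^{m+1}=\vec X^m+\delta\vec X^{m+1}$, $$\Big(\vec X^m\cdot\vec e_1\,\tfrac{\vec X^{m+1}-\vec X^m}{\Delta t_m},\vec\chi\,|\vec X^m_\rho|\Big)_\sharp=\Big((\vec X^m\cdot\vec e_1)\vec\kappa^{m+1},\vec\chi\,|\vec X^m_\rho|\Big)_\sharp\quad\forall\,\vec\chi\in[W_\sharp]^2,$$ $$\Big((\vec X^m\cdot\vec e_1)\vec\kappa^{m+1},\vec\eta\,|\vec X^m_\rho|\Big)_\sharp+\big(\vec\eta\cdot\vec e_1,|\vec X^m_\rho|\big)+\Big((\vec X^m\cdot\vec e_1)\vec X^{m+1}_\rho,\vec\eta_\rho|\vec X^m_\rho|^{-1}\Big)=-\sum_{i=1}^2\sum_{p\in\partial_iI}\widehat\varrho^{(p)}(\vec X^m(p)\cdot\vec e_1)\,\vec\eta(p)\cdot\vec e_{3-i}\quad\forall\,\vec\eta\in\underline V^h_\partial .$$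
   Context: Setup. $\vec e_1=(1,0)^T$, $\vec e_2=(0,1)^T$; "$\cdot$" is the Euclidean inner product. $I$ is either the periodic interval $\mathbb R/\mathbb Z$ (with $\partial I=\emptyset$) or $I=(0,1)$ (with $\partial I=\{0,1\}$). $\partial I=\partial_DI\cup\partial_0I\cup\partial_1I\cup\partial_2I$ is a given disjoint partition, and $\widehat\varrho^{(p)}\in\mathbb R$, $p\in\{0,1\}$, are given constants with $|\widehat\varrho^{(p)}|\le1$. Let $J\ge3$, $h=1/J$, $q_j=jh$ ($j=0,\dots,J$; $q_0=q_J$ identified in the periodic case). $V^h$ is the space of continuous functions on $\overline I$ (periodic if $I=\mathbb R/\mathbb Z$) that are affine on each $[q_{j-1},q_j]$; $\underline V^h=[V^h]^2$; $\underline V^h_{\partial_0}=\{\vec\eta\in\underline V^h:\vec\eta(\rho)\cdot\vec e_1=0\ \forall\rho\in\partial_0I\}$; $\underline V^h_\partial=\{\vec\eta\in\underline V^h_{\partial_0}:\vec\eta(\rho)\cdot\vec e_i=0\ \forall\rho\in\partial_iI,\ i=1,2;\ \vec\eta(\rho)=\vec0\ \forall\rho\in\partial_DI\}$; $W^h_{\partial_0}=\{\chi\in V^h:\chi(\rho)=0\ \forall\rho\in\partial_0I\}$. $(\cdot,\cdot)$ is the $L^2(I)$ inner product (with dot product for vector functions), and for piecewise continuous $f,g$ the mass-lumped product is $(f,g)^h=\tfrac h2\sum_{j=1}^J[(fg)(q_j^-)+(fg)(q_{j-1}^+)]$. Two variants: in the "lumped" variant $(\cdot,\cdot)_\sharp=(\cdot,\cdot)^h$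 and $W_\sharp=W^h_{\partial_0}$; in the "exact" variant $(\cdot,\cdot)_\sharp=(\cdot,\cdot)$ and $W_\sharp=V^h$. Assumption $(\mathfrak A)$: $|\vec X^m_\rho|>0$ a.e. on $I$ and $\vec X^m(\rho)\cdot\vec e_1>0$ for all $\rho\in\overline I\setminus\partial_0I$. *)

theory Defs
  imports "HOL-Analysis.Analysis"
begin

text \<open>A flag per selects the periodic interval R/Z (per = True) or (0,1) (per = False).
  Functions are represented as maps real => _ ; only their values on [0,1] matter.\<close>

definition node :: "nat \<Rightarrow> nat \<Rightarrow> real" where
  "node J j = real j / real J"

definition e1 :: "real \<times> real" where "e1 = (1, 0)"
definition e2 :: "real \<times> real" where "e2 = (0, 1)"

definition bdry :: "bool \<Rightarrow> real set" where
  "bdry per = (if per then {} else {0, 1})"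

definition boundary_partition :: "bool \<Rightarrow> real set \<Rightarrow> real set \<Rightarrow> real set \<Rightarrow> real set \<Rightarrow> bool" where
  "boundary_partition per PD P0 P1 P2 \<longleftrightarrow>
     PD \<union> P0 \<union> P1 \<union> P2 = bdry per \<and>
     PD \<inter> P0 = {} \<and> PD \<inter> P1 = {} \<and> PD \<inter> P2 = {} \<and>
     P0 \<inter> P1 = {} \<and> P0 \<inter> P2 = {} \<and> P1 \<inter> P2 = {}"

definition Vh :: "nat \<Rightarrow> bool \<Rightarrow> (real \<Rightarrow> real) set" where
  "Vh J per = {f. continuous_on {0..1} f \<and>
      (\<forall>j\<in>{1..J}. \<exists>a b. \<forall>x\<in>{node J (j - 1)..node J j}. f x = a + b * x) \<and>
      (per \<longrightarrow> f 0 = f 1)}"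

definition VVh :: "nat \<Rightarrow> bool \<Rightarrow> (real \<Rightarrow> real \<times> real) set" where
  "VVh J per = {X. (\<lambda>x. X x \<bullet> e1) \<in> Vh J per \<and> (\<lambda>x. X x \<bullet> e2) \<in> Vh J per}"

definition VVh_d0 :: "nat \<Rightarrow> bool \<Rightarrow> real set \<Rightarrow> (real \<Rightarrow> real \<times> real) set" where
  "VVh_d0 J per P0 = {X \<in> VVh J per. \<forall>\<rho>\<in>P0. X \<rho> \<bullet> e1 = 0}"

definition VVh_d :: "nat \<Rightarrow> bool \<Rightarrow> real set \<Rightarrow> real set \<Rightarrow> real set \<Rightarrow> real set
    \<Rightarrow> (real \<Rightarrow> real \<times> real) set" where
  "VVh_d J per PD P0 P1 P2 = {X \<in> VVh_d0 J per P0.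
      (\<forall>\<rho>\<in>P1. X \<rho> \<bullet> e1 = 0) \<and> (\<forall>\<rho>\<in>P2. X \<rho> \<bullet> e2 = 0) \<and> (\<forall>\<rho>\<in>PD. X \<rho> = 0)}"

definition Wh_d0 :: "nat \<Rightarrow> bool \<Rightarrow> real set \<Rightarrow> (real \<Rightarrow> real) set" where
  "Wh_d0 J per P0 = {c \<in> Vh J per. \<forall>\<rho>\<in>P0. c \<rho> = 0}"

text \<open>Spatial derivative X_rho (defined a.e., namely away from the nodes).\<close>
definition drho :: "(real \<Rightarrow> real \<times> real) \<Rightarrow> real \<Rightarrow> real \<times> real" where
  "drho X x = vector_derivative X (at x)"

definition ip_exact :: "(real \<Rightarrow> real \<times> real) \<Rightarrow> (real \<Rightarrow> real \<times> real) \<Rightarrow> real" where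
  "ip_exact F G = integral {0..1} (\<lambda>x. F x \<bullet> G x)"

definition ip_lumped :: "nat \<Rightarrow> (real \<Rightarrow> real \<times> real) \<Rightarrow> (real \<Rightarrow> real \<times> real) \<Rightarrow> real" where
  "ip_lumped J F G = (1 / real J) / 2 * (\<Sum>j=1..J.
      Lim (at_left (node J j)) (\<lambda>x. F x \<bullet> G x) + Lim (at_right (node J (j - 1))) (\<lambda>x. F x \<bullet> G x))"

definition ip_sharp :: "bool \<Rightarrow> nat \<Rightarrow> (real \<Rightarrow> real \<times> real) \<Rightarrow> (real \<Rightarrow> real \<times> real) \<Rightarrow> real" where
  "ip_sharp lumped J F G = (if lumped then ip_lumped J F G else ip_exact F G)"

definition W_sharp :: "bool \<Rightarrow> nat \<Rightarrow> bool \<Rightarrow> real set \<Rightarrow> (real \<Rightarrow> real) set" where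
  "W_sharp lumped J per P0 = (if lumped then Wh_d0 J per P0 else Vh J per)"

definition WW_sharp :: "bool \<Rightarrow> nat \<Rightarrow> bool \<Rightarrow> real set \<Rightarrow> (real \<Rightarrow> real \<times> real) set" where
  "WW_sharp lumped J per P0 = {K. (\<lambda>x. K x \<bullet> e1) \<in> W_sharp lumped J per P0 \<and>
                                   (\<lambda>x. K x \<bullet> e2) \<in> W_sharp lumped J per P0}"

definition scheme_eqs :: "bool \<Rightarrow> nat \<Rightarrow> bool \<Rightarrow> real set \<Rightarrow> real set \<Rightarrow> real set \<Rightarrow> real set
    \<Rightarrow> (real \<Rightarrow> real) \<Rightarrow> real \<Rightarrow> (real \<Rightarrow> real \<times> real)
    \<Rightarrow> (real \<Rightarrow> real \<times> real) \<Rightarrow> (real \<Rightarrow> real \<times> real) \<Rightarrow> bool" where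
  "scheme_eqs lumped J per PD P0 P1 P2 rh dt Xm dX K \<longleftrightarrow>
    (let Xn = (\<lambda>x. Xm x + dX x) in
     (\<forall>c\<in>WW_sharp lumped J per P0.
        ip_sharp lumped J (\<lambda>x. ((Xm x \<bullet> e1) / dt) *\<^sub>R (Xn x - Xm x)) (\<lambda>x. norm (drho Xm x) *\<^sub>R c x)
      = ip_sharp lumped J (\<lambda>x. (Xm x \<bullet> e1) *\<^sub>R K x) (\<lambda>x. norm (drho Xm x) *\<^sub>R c x)) \<and>
     (\<forall>\<eta>\<in>VVh_d J per PD P0 P1 P2.
        ip_sharp lumped J (\<lambda>x. (Xm x \<bullet> e1) *\<^sub>R K x) (\<lambda>x. norm (drho Xm x) *\<^sub>R \<eta> x)
        + integral {0..1} (\<lambda>x. (\<eta> x \<bullet> e1) * norm (drho Xm x))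
        + integral {0..1} (\<lambda>x. ((Xm x \<bullet> e1) *\<^sub>R drho Xn x) \<bullet> (inverse (norm (drho Xm x)) *\<^sub>R drho \<eta> x))
      = - ((\<Sum>p\<in>P1. rh p * (Xm p \<bullet> e1) * (\<eta> p \<bullet> e2))
           + (\<Sum>p\<in>P2. rh p * (Xm p \<bullet> e1) * (\<eta> p \<bullet> e1)))))"

end

theory Submission
  imports Defs "Jordan_Normal_Form.Determinant"
begin

text \<open>The scheme is linear in the unknowns \<open>(\<delta>X, \<kappa>)\<close> and is tested against the
  spaces the unknowns live in, so in nodal coordinates it is a square linear system; existence
  therefore follows from uniqueness. For uniqueness, test the homogeneous first equation with
  \<open>\<kappa>\<close> and the second with \<open>\<delta>X\<close>. With \<open>r = X\<^sup>m \<cdot> e\<^sub>1\<close> this gives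
  \<open>\<Delta>t (r |X\<^sup>m\<^sub>\<rho>| \<kappa>, \<kappa>)\<^sub>\<sharp> + (r |X\<^sup>m\<^sub>\<rho>|\<^sup>-\<^sup>1 \<delta>X\<^sub>\<rho>, \<delta>X\<^sub>\<rho>) = 0\<close>,
  a sum of two nonnegative terms. As \<open>r > 0\<close> away from \<open>\<partial>\<^sub>0I\<close> and \<open>X\<^sup>m\<^sub>\<rho>\<close> is a nonzero
  constant on every element, \<open>\<delta>X\<close> is constant and \<open>\<kappa> = 0\<close>; testing the first
  equation with that constant times the hat function of the interior node \<open>q\<^sub>1\<close> shows
  the constant vanishes.\<close>

lemma square_system_solvable_if_injective:
  fixes M :: "nat \<Rightarrow> nat \<Rightarrow> real"
  assumes inj: "\<And>c. (\<forall>i<n. (\<Sum>j<n. M i j * c j) = 0) \<Longrightarrow> (\<forall>j<n. c j = 0)"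
  shows "\<exists>c. \<forall>i<n. (\<Sum>j<n. M i j * c j) = f i"
proof -
  define A where "A = mat n n (\<lambda>(i,j). M i j)"
  have A: "A \<in> carrier_mat n n" unfolding A_def by simp
  have "det A \<noteq> 0"
  proof
    assume "det A = 0"
    then obtain v where v: "v \<in> carrier_vec n" "v \<noteq> 0\<^sub>v n" "A *\<^sub>v v = 0\<^sub>v n"
      using det_0_iff_vec_prod_zero_field[OF A] by blast
    have "\<forall>i<n. (\<Sum>j<n. M i j * v $ j) = 0"
    proof (intro allI impI)
      fix i assume i: "i < n"
      have "(A *\<^sub>v v) $ i = 0" using v(3) i by simp
      then show "(\<Sum>j<n. M i j * v $ j) = 0" using i v(1)
        by (simp add: A_def mult_mat_vec_def scalar_prod_def lessThan_atLeast0)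
    qed
    from inj[OF this] have "\<forall>j<n. v $ j = 0" .
    then have "v = 0\<^sub>v n" using v(1) by (intro eq_vecI) auto
    with v(2) show False by simp
  qed
  from det_non_zero_imp_unit[OF A this, of "()"]
  obtain B where B: "B \<in> carrier_mat n n" "A * B = 1\<^sub>m n"
    unfolding Units_def by (auto simp: ring_mat_def)
  define x where "x = B *\<^sub>v vec n f"
  have "A *\<^sub>v x = vec n f" unfolding x_def
    using B A by (metis assoc_mult_mat_vec one_mult_mat_vec vec_carrier)
  show ?thesis
  proof (intro exI allI impI)
    fix i assume i: "i < n"
    have "(A *\<^sub>v x) $ i = f i" using \<open>A *\<^sub>v x = vec n f\<close> i by simp
    moreover have "x \<in> carrier_vec n" unfolding x_def using B by simp
    ultimately show "(\<Sum>j<n. M i j * x $ j) = f i" using i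
      by (simp add: A_def mult_mat_vec_def scalar_prod_def lessThan_atLeast0)
  qed
qed

(* Jordan_Normal_Form's scalar product notation would otherwise shadow the inner product. *)
no_notation scalar_prod (infix "\<bullet>" 70)

section \<open>Piecewise continuous densities and the two quadratures\<close>

definition nodes :: "nat \<Rightarrow> real set" where "nodes J = node J ` {..J}"

text \<open>Densities such as \<open>|X\<^sub>\<rho>|\<close> jump at the nodes; on each open element they agree with a
  function continuous up to the endpoints, which provides the one-sided limits used by mass lumping.\<close>

definition pwc :: "nat \<Rightarrow> (real \<Rightarrow> 'a::real_normed_vector) \<Rightarrow> bool" where
  "pwc J f \<longleftrightarrow> (\<forall>j\<in>{1..J}. \<exists>g. continuous_on {node J (j-1)..node J j} g \<and>
      (\<forall>x\<in>{node J (j-1)<..<node J j}. f x = g x))"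

lemma finite_nodes[simp]: "finite (nodes J)" by (simp add: nodes_def)

lemma node_less: "J > 0 \<Longrightarrow> i < j \<Longrightarrow> node J i < node J j"
  by (simp add: node_def divide_strict_right_mono)

lemma node_le: "J > 0 \<Longrightarrow> i \<le> j \<Longrightarrow> node J i \<le> node J j"
  by (simp add: node_def divide_right_mono)

lemma node_0[simp]: "node J 0 = 0" by (simp add: node_def)

lemma node_J[simp]: "J > 0 \<Longrightarrow> node J J = 1" by (simp add: node_def)

lemma node_in_unit: "J > 0 \<Longrightarrow> j \<le> J \<Longrightarrow> node J j \<in> {0..1}"
  using node_le[of J 0 j] node_le[of J j J] by simp

lemma element_subset_unit: "J > 0 \<Longrightarrow> j \<in> {1..J} \<Longrightarrow> {node J (j-1)..node J j} \<subseteq> {0..1}"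
  using node_in_unit[of J "j-1"] node_in_unit[of J j] by auto

lemma open_element_not_node:
  assumes "J > 0" "j \<in> {1..J}" "x \<in> {node J (j-1)<..<node J j}"
  shows "x \<notin> nodes J" "x \<in> {0..1}"
proof -
  show "x \<notin> nodes J"
  proof
    assume "x \<in> nodes J"
    then obtain i where i: "i \<le> J" "x = node J i" by (auto simp: nodes_def)
    have "real (j-1) / real J < real i / real J" "real i / real J < real j / real J"
      using assms i by (auto simp: node_def)
    then have "real (j-1) < real i" "real i < real j" using assms(1)
      by (simp_all add: divide_less_cancel)
    then show False using assms(2) by auto
  qed
  show "x \<in> {0..1}" using element_subset_unit[OF assms(1,2)] assms(3) by auto
qed

lemma open_elements_cover:
  assumes J: "J > 0" and x: "x \<in> {0..1}" "x \<notin> nodes J"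
  shows "\<exists>j\<in>{1..J}. x \<in> {node J (j-1)<..<node J j}"
proof -
  define j where "j = nat \<lceil>real J * x\<rceil>"
  have nI: "real J * x \<notin> \<int>"
  proof
    assume "real J * x \<in> \<int>"
    then obtain k where k: "real J * x = of_int k" by (auto elim: Ints_cases)
    have a: "0 \<le> real J * x" using x by auto
    have b: "real J * x \<le> real J" using x mult_left_le[of x "real J"] by auto
    have "0 \<le> k" using a k by linarith
    moreover have "real_of_int k \<le> real J" using b k by linarith
    then have "k \<le> int J" by linarith
    ultimately have "0 \<le> k" "k \<le> int J" by auto
    then have "x = node J (nat k)" using k J by (auto simp: node_def field_simps)
    moreover have "nat k \<le> J" using \<open>k \<le> int J\<close> by auto
    ultimately show False using x by (auto simp: nodes_def)
  qed
  have c1: "real_of_int \<lceil>real J * x\<rceil> - 1 < real J * x" by linarith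
  have c2: "real J * x < real_of_int \<lceil>real J * x\<rceil>"
    using nI le_of_int_ceiling[of "real J * x"] by (metis Ints_of_int order_le_less)
  have "0 \<le> real J * x" using x by auto
  then have "0 < \<lceil>real J * x\<rceil>" using c2 by linarith
  have "real J * x \<le> real J" using x J by auto
  then have "\<lceil>real J * x\<rceil> \<le> int J" by (simp add: ceiling_le_iff)
  have jr: "real j = real_of_int \<lceil>real J * x\<rceil>" using \<open>0 < \<lceil>real J * x\<rceil>\<close> by (simp add: j_def)
  have "1 \<le> j" using \<open>0 < \<lceil>real J * x\<rceil>\<close> unfolding j_def by linarith
  moreover have "j \<le> J" using \<open>\<lceil>real J * x\<rceil> \<le> int J\<close> unfolding j_def by linarith
  ultimately have "j \<in> {1..J}" by auto
  moreover have "real (j - 1) = real j - 1" using \<open>j \<in> {1..J}\<close> by auto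
  ultimately show ?thesis using c1 c2 J jr
    by (intro bexI[of _ j]) (auto simp: node_def field_simps)
qed

lemma elements_cover:
  assumes J: "J > 0" and x: "x \<in> {0..1}"
  shows "\<exists>j\<in>{1..J}. x \<in> {node J (j-1)..node J j}"
proof (cases "x \<in> nodes J")
  case True
  then obtain i where i: "i \<le> J" "x = node J i" by (auto simp: nodes_def)
  show ?thesis
  proof (cases "i = 0")
    case True thus ?thesis using i J node_le[OF J, of 0 1] by (intro bexI[of _ 1]) auto
  next
    case False thus ?thesis using i J node_le[OF J, of "i-1" i] by (intro bexI[of _ i]) auto
  qed
next
  case False
  then obtain j where "j\<in>{1..J}" "x \<in> {node J (j-1)<..<node J j}" using open_elements_cover[OF J x] by blast
  then show ?thesis by (intro bexI[of _ j]) auto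
qed

lemma pwc_cont: "J > 0 \<Longrightarrow> continuous_on {0..1} f \<Longrightarrow> pwc J f"
  unfolding pwc_def by (metis continuous_on_subset element_subset_unit)

lemma pwc_const: "pwc J (\<lambda>x. c)"
  unfolding pwc_def by (auto intro!: exI[of _ "\<lambda>x. c"])

lemma pwc_locally_const: "(\<And>j. j\<in>{1..J} \<Longrightarrow> \<exists>v. \<forall>x\<in>{node J (j-1)<..<node J j}. f x = v) \<Longrightarrow> pwc J f"
  unfolding pwc_def by (metis continuous_on_const)

lemma pwc_compose2:
  assumes "pwc J f" "pwc J g"
    and H: "continuous_on UNIV H"
  shows "pwc J (\<lambda>x. H (f x, g x))"
  unfolding pwc_def
proof
  fix j assume j: "j \<in> {1..J}"
  obtain f' where f': "continuous_on {node J (j-1)..node J j} f'" "\<forall>x\<in>{node J (j-1)<..<node J j}. f x = f' x"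
    using assms(1) j unfolding pwc_def by blast
  obtain g' where g': "continuous_on {node J (j-1)..node J j} g'" "\<forall>x\<in>{node J (j-1)<..<node J j}. g x = g' x"
    using assms(2) j unfolding pwc_def by blast
  have "continuous_on {node J (j-1)..node J j} (\<lambda>x. H (f' x, g' x))"
    by (rule continuous_on_compose2[OF H]) (rule continuous_on_Pair[OF f'(1) g'(1)], simp)
  then show "\<exists>k. continuous_on {node J (j-1)..node J j} k \<and> (\<forall>x\<in>{node J (j-1)<..<node J j}. H (f x, g x) = k x)"
    using f' g' by auto
qed

lemma pwc_add: "pwc J f \<Longrightarrow> pwc J g \<Longrightarrow> pwc J (\<lambda>x. f x + g x)"
  using pwc_compose2[of J f g "\<lambda>p. fst p + snd p"] by (simp add: continuous_on_add continuous_on_fst continuous_on_snd continuous_on_id)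

lemma pwc_diff: "pwc J f \<Longrightarrow> pwc J g \<Longrightarrow> pwc J (\<lambda>x. f x - g x)"
  using pwc_compose2[of J f g "\<lambda>p. fst p - snd p"] by (simp add: continuous_on_diff continuous_on_fst continuous_on_snd continuous_on_id)

lemma pwc_mult: "pwc J f \<Longrightarrow> pwc J g \<Longrightarrow> pwc J (\<lambda>x. f x * (g x :: real))"
  using pwc_compose2[of J f g "\<lambda>p. fst p * snd p"] by (simp add: continuous_on_mult continuous_on_fst continuous_on_snd continuous_on_id)

lemma pwc_scaleR: "pwc J f \<Longrightarrow> pwc J g \<Longrightarrow> pwc J (\<lambda>x. f x *\<^sub>R g x)"
  using pwc_compose2[of J f g "\<lambda>p. fst p *\<^sub>R snd p"] by (simp add: continuous_on_scaleR continuous_on_fst continuous_on_snd continuous_on_id)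

lemma pwc_inner: "pwc J f \<Longrightarrow> pwc J g \<Longrightarrow> pwc J (\<lambda>x. f x \<bullet> (g x :: 'a::real_inner))"
  using pwc_compose2[of J f g "\<lambda>p. fst p \<bullet> snd p"] by (simp add: continuous_on_inner continuous_on_fst continuous_on_snd continuous_on_id)

definition quad :: "bool \<Rightarrow> nat \<Rightarrow> (real \<Rightarrow> real) \<Rightarrow> real" where
  "quad lumped J P = (if lumped then (1 / real J) / 2 * (\<Sum>j=1..J.
      Lim (at_left (node J j)) P + Lim (at_right (node J (j - 1))) P) else integral {0..1} P)"

lemma ip_sharp_eq_quad: "ip_sharp lumped J F G = quad lumped J (\<lambda>x. F x \<bullet> G x)"
  by (simp add: ip_sharp_def ip_lumped_def ip_exact_def quad_def)

lemma pwcE: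
  assumes "pwc J f" "j \<in> {1..J}"
  obtains g where "continuous_on {node J (j-1)..node J j} g" "\<forall>x\<in>{node J (j-1)<..<node J j}. f x = g x"
  using assms unfolding pwc_def by blast

lemma at_left_eq_within_Ioo:
  assumes "a < (b::real)"
  shows "at b within {a<..<b} = at_left b"
  by (rule at_within_nhd[of _ "{a<..}"]) (use assms in auto)

lemma at_right_eq_within_Ioo:
  assumes "a < (b::real)"
  shows "at a within {a<..<b} = at_right a"
  by (rule at_within_nhd[of _ "{..<b}"]) (use assms in auto)

lemma element_tendsto_ends:
  fixes P :: "real \<Rightarrow> 'a::real_normed_vector"
  assumes J: "J > 0" and j: "j \<in> {1..J}"
    and g: "continuous_on {node J (j-1)..node J j} g" "\<forall>x\<in>{node J (j-1)<..<node J j}. P x = g x"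
  shows "(P \<longlongrightarrow> g (node J j)) (at_left (node J j))"
    "(P \<longlongrightarrow> g (node J (j-1))) (at_right (node J (j-1)))"
proof -
  have lt: "node J (j-1) < node J j" using node_less[OF J, of "j-1" j] j by auto
  have "(g \<longlongrightarrow> g (node J j)) (at (node J j) within {node J (j-1)..node J j})"
    using g(1) lt unfolding continuous_on_def by auto
  then have "(g \<longlongrightarrow> g (node J j)) (at (node J j) within {node J (j-1)<..<node J j})"
    by (rule tendsto_within_subset) auto
  then have "(g \<longlongrightarrow> g (node J j)) (at_left (node J j))" using at_left_eq_within_Ioo[OF lt] by simp
  moreover have "eventually (\<lambda>x. P x = g x) (at_left (node J j))"
    using eventually_at_left_real[OF lt] by eventually_elim (use g(2) in auto)
  ultimately show "(P \<longlongrightarrow> g (node J j)) (at_left (node J j))"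
    using tendsto_cong by blast
  have "(g \<longlongrightarrow> g (node J (j-1))) (at (node J (j-1)) within {node J (j-1)..node J j})"
    using g(1) lt unfolding continuous_on_def by auto
  then have "(g \<longlongrightarrow> g (node J (j-1))) (at (node J (j-1)) within {node J (j-1)<..<node J j})"
    by (rule tendsto_within_subset) auto
  then have "(g \<longlongrightarrow> g (node J (j-1))) (at_right (node J (j-1)))" using at_right_eq_within_Ioo[OF lt] by simp
  moreover have "eventually (\<lambda>x. P x = g x) (at_right (node J (j-1)))"
    using eventually_at_right_real[OF lt] by eventually_elim (use g(2) in auto)
  ultimately show "(P \<longlongrightarrow> g (node J (j-1))) (at_right (node J (j-1)))"
    using tendsto_cong by blast
qed

lemma element_Lim_ends:
  fixes P :: "real \<Rightarrow> 'a::real_normed_vector"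
  assumes J: "J > 0" and j: "j \<in> {1..J}"
    and g: "continuous_on {node J (j-1)..node J j} g" "\<forall>x\<in>{node J (j-1)<..<node J j}. P x = g x"
  shows "Lim (at_left (node J j)) P = g (node J j)" "Lim (at_right (node J (j-1))) P = g (node J (j-1))"
  using element_tendsto_ends[OF assms] by (auto intro: tendsto_Lim)

lemma pwc_tendsto_Lim:
  fixes P :: "real \<Rightarrow> 'a::real_normed_vector"
  assumes J: "J > 0" and j: "j \<in> {1..J}" and "pwc J P"
  shows "(P \<longlongrightarrow> Lim (at_left (node J j)) P) (at_left (node J j))"
    "(P \<longlongrightarrow> Lim (at_right (node J (j-1))) P) (at_right (node J (j-1)))"
proof -
  obtain g where g: "continuous_on {node J (j-1)..node J j} g" "\<forall>x\<in>{node J (j-1)<..<node J j}. P x = g x"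
    using pwcE[OF assms(3) j] by blast
  show "(P \<longlongrightarrow> Lim (at_left (node J j)) P) (at_left (node J j))"
    "(P \<longlongrightarrow> Lim (at_right (node J (j-1))) P) (at_right (node J (j-1)))"
    using element_tendsto_ends[OF J j g] element_Lim_ends[OF J j g] by auto
qed

lemma pwc_integrable:
  assumes J: "J > 0" and P: "pwc J (P :: real \<Rightarrow> real)"
  shows "P integrable_on {0..1}"
proof -
  have "k \<le> J \<Longrightarrow> P integrable_on {0..node J k}" for k
  proof (induction k)
    case 0
    then show ?case using integrable_on_refl[of P 0] by simp
  next
    case (Suc k)
    have j: "Suc k \<in> {1..J}" using Suc by auto
    obtain g where g: "continuous_on {node J k..node J (Suc k)} g" "\<forall>x\<in>{node J k<..<node J (Suc k)}. P x = g x"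
      using pwcE[OF P j] by auto
    have "g integrable_on {node J k..node J (Suc k)}" using g(1) by (rule integrable_continuous_interval)
    moreover have "\<forall>x\<in>{node J k..node J (Suc k)} - {node J k, node J (Suc k)}. P x = g x"
      using g(2) by auto
    ultimately have "P integrable_on {node J k..node J (Suc k)}"
      using integrable_spike_finite[of "{node J k, node J (Suc k)}" "{node J k..node J (Suc k)}" P g] by blast
    then show ?case
      using Suc node_le[OF J, of 0 k] node_le[OF J, of k "Suc k"]
      using Henstock_Kurzweil_Integration.integrable_combine[of 0 "node J k" "node J (Suc k)" P] by simp
  qed
  from this[of J] J show ?thesis by simp
qed

lemma quad_cong:
  assumes J: "J > 0" and eq: "\<forall>x\<in>{0..1} - nodes J. P x = Q x"
  shows "quad lumped J P = quad lumped J Q"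
proof -
  have "Lim (at_left (node J j)) P = Lim (at_left (node J j)) Q \<and>
        Lim (at_right (node J (j-1))) P = Lim (at_right (node J (j-1))) Q" if j: "j \<in> {1..J}" for j
  proof -
    have lt: "node J (j-1) < node J j" using node_less[OF J, of "j-1" j] j by auto
    have e: "\<forall>x\<in>{node J (j-1)<..<node J j}. P x = Q x"
      using eq open_element_not_node[OF J j] by auto
    have "eventually (\<lambda>x. P x = Q x) (at_left (node J j))"
      using eventually_at_left_real[OF lt] by eventually_elim (use e in auto)
    moreover have "eventually (\<lambda>x. P x = Q x) (at_right (node J (j-1)))"
      using eventually_at_right_real[OF lt] by eventually_elim (use e in auto)
    ultimately show ?thesis using Lim_cong by blast
  qed
  then have S: "(\<Sum>j=1..J. Lim (at_left (node J j)) P + Lim (at_right (node J (j - 1))) P) =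
      (\<Sum>j=1..J. Lim (at_left (node J j)) Q + Lim (at_right (node J (j - 1))) Q)"
    by (intro sum.cong refl) auto
  moreover have "integral {0..1} P = integral {0..1} Q"
    by (rule integral_spike[of "nodes J"]) (use eq in \<open>auto intro: negligible_finite\<close>)
  ultimately show ?thesis unfolding quad_def by simp
qed

lemma quad_sum:
  assumes J: "J > 0" and L: "finite L" and pwc: "\<And>l. l \<in> L \<Longrightarrow> pwc J (P l)"
    and eq: "\<forall>x\<in>{0..1} - nodes J. Q x = (\<Sum>l\<in>L. c l * P l x)"
  shows "quad lumped J Q = (\<Sum>l\<in>L. c l * quad lumped J (P l))"
proof -
  have "quad lumped J Q = quad lumped J (\<lambda>x. \<Sum>l\<in>L. c l * P l x)"
    by (rule quad_cong[OF J eq])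
  also have "\<dots> = (\<Sum>l\<in>L. c l * quad lumped J (P l))"
  proof (cases lumped)
    case True
    have "Lim (at_left (node J j)) (\<lambda>x. \<Sum>l\<in>L. c l * P l x) = (\<Sum>l\<in>L. c l * Lim (at_left (node J j)) (P l)) \<and>
          Lim (at_right (node J (j-1))) (\<lambda>x. \<Sum>l\<in>L. c l * P l x) = (\<Sum>l\<in>L. c l * Lim (at_right (node J (j-1))) (P l))"
      if j: "j \<in> {1..J}" for j
    proof -
      have "((\<lambda>x. \<Sum>l\<in>L. c l * P l x) \<longlongrightarrow> (\<Sum>l\<in>L. c l * Lim (at_left (node J j)) (P l))) (at_left (node J j))"
        by (rule tendsto_sum, rule tendsto_mult, rule tendsto_const, rule pwc_tendsto_Lim(1)[OF J j pwc], assumption)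
      moreover have "((\<lambda>x. \<Sum>l\<in>L. c l * P l x) \<longlongrightarrow> (\<Sum>l\<in>L. c l * Lim (at_right (node J (j-1))) (P l))) (at_right (node J (j-1)))"
        by (rule tendsto_sum, rule tendsto_mult, rule tendsto_const, rule pwc_tendsto_Lim(2)[OF J j pwc], assumption)
      ultimately show ?thesis by (simp add: tendsto_Lim)
    qed
    then have "(\<Sum>j=1..J. Lim (at_left (node J j)) (\<lambda>x. \<Sum>l\<in>L. c l * P l x) + Lim (at_right (node J (j - 1))) (\<lambda>x. \<Sum>l\<in>L. c l * P l x))
       = (\<Sum>j=1..J. \<Sum>l\<in>L. c l * (Lim (at_left (node J j)) (P l) + Lim (at_right (node J (j - 1))) (P l)))"
      by (intro sum.cong refl) (simp add: sum.distrib distrib_left)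
    also have "\<dots> = (\<Sum>l\<in>L. \<Sum>j=1..J. c l * (Lim (at_left (node J j)) (P l) + Lim (at_right (node J (j - 1))) (P l)))"
      by (rule sum.swap)
    also have "\<dots> = (\<Sum>l\<in>L. c l * (\<Sum>j=1..J. Lim (at_left (node J j)) (P l) + Lim (at_right (node J (j - 1))) (P l)))"
      by (simp add: sum_distrib_left)
    finally show ?thesis using True unfolding quad_def
      by (simp add: sum_distrib_left mult_ac)
  next
    case False
    have "integral {0..1} (\<lambda>x. \<Sum>l\<in>L. c l * P l x) = (\<Sum>l\<in>L. integral {0..1} (\<lambda>x. c l * P l x))"
    proof (rule integral_sum[OF L])
      fix l assume "l \<in> L"
      then have "P l integrable_on {0..1}" using pwc_integrable[OF J pwc] by blast
      then show "(\<lambda>x. c l * P l x) integrable_on {0..1}" using integrable_on_cmult_left[of "P l" _ "c l"] by simp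
    qed
    then show ?thesis using False unfolding quad_def by simp
  qed
  finally show ?thesis .
qed

lemma integrable_spike_nodes: "(P::real\<Rightarrow>real) integrable_on S \<Longrightarrow> (\<lambda>x. if x \<in> nodes J then 0 else P x) integrable_on S"
  by (rule integrable_spike_finite[where S="nodes J" and f=P]) auto

lemma quad_nonneg:
  fixes P :: "real \<Rightarrow> real"
  assumes J: "J > 0" and P: "pwc J P" and nn: "\<forall>x\<in>{0..1} - nodes J. 0 \<le> P x"
  shows "0 \<le> quad lumped J P"
proof (cases lumped)
  case True
  have "0 \<le> Lim (at_left (node J j)) P \<and> 0 \<le> Lim (at_right (node J (j-1))) P" if j: "j \<in> {1..J}" for j
  proof -
    have lt: "node J (j-1) < node J j" using node_less[OF J, of "j-1" j] j by auto
    have e: "\<forall>x\<in>{node J (j-1)<..<node J j}. 0 \<le> P x"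
      using nn open_element_not_node[OF J j] by auto
    have "eventually (\<lambda>x. 0 \<le> P x) (at_left (node J j))"
      using eventually_at_left_real[OF lt] by eventually_elim (use e in auto)
    moreover have "eventually (\<lambda>x. 0 \<le> P x) (at_right (node J (j-1)))"
      using eventually_at_right_real[OF lt] by eventually_elim (use e in auto)
    ultimately show ?thesis using pwc_tendsto_Lim[OF J j P]
      by (auto intro: tendsto_lowerbound)
  qed
  then have "0 \<le> (\<Sum>j=1..J. Lim (at_left (node J j)) P + Lim (at_right (node J (j - 1))) P)"
    by (intro sum_nonneg add_nonneg_nonneg) auto
  then show ?thesis using True unfolding quad_def by simp
next
  case False
  have "integral {0..1} P = integral {0..1} (\<lambda>x. if x \<in> nodes J then 0 else P x)"
    by (rule integral_spike[of "nodes J"]) (auto intro: negligible_finite)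
  also have "0 \<le> \<dots>"
    by (rule integral_nonneg)
      (auto intro!: integrable_spike_nodes pwc_integrable[OF J P] simp: nn)
  finally show ?thesis using False unfolding quad_def by simp
qed

lemma lumped_quad_zero_imp_ends_zero:
  fixes P :: "real \<Rightarrow> real"
  assumes J: "J > 0" and P: "pwc J P" and nn: "\<forall>x\<in>{0..1} - nodes J. 0 \<le> P x"
    and z: "quad True J P = 0" and j: "j \<in> {1..J}"
  shows "Lim (at_left (node J j)) P = 0 \<and> Lim (at_right (node J (j-1))) P = 0"
proof -
  have nn2: "0 \<le> Lim (at_left (node J j)) P \<and> 0 \<le> Lim (at_right (node J (j-1))) P" if j: "j \<in> {1..J}" for j
  proof -
    have lt: "node J (j-1) < node J j" using node_less[OF J, of "j-1" j] j by auto
    have e: "\<forall>x\<in>{node J (j-1)<..<node J j}. 0 \<le> P x"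
      using nn open_element_not_node[OF J j] by auto
    have "eventually (\<lambda>x. 0 \<le> P x) (at_left (node J j))"
      using eventually_at_left_real[OF lt] by eventually_elim (use e in auto)
    moreover have "eventually (\<lambda>x. 0 \<le> P x) (at_right (node J (j-1)))"
      using eventually_at_right_real[OF lt] by eventually_elim (use e in auto)
    ultimately show ?thesis using pwc_tendsto_Lim[OF J j P]
      by (auto intro: tendsto_lowerbound)
  qed
  have "(\<Sum>j=1..J. Lim (at_left (node J j)) P + Lim (at_right (node J (j - 1))) P) = 0"
    using z J unfolding quad_def by simp
  then have "\<forall>j\<in>{1..J}. Lim (at_left (node J j)) P + Lim (at_right (node J (j - 1))) P = 0"
    by (subst (asm) sum_nonneg_eq_0_iff) (use nn2 in auto)
  then have "Lim (at_left (node J j)) P + Lim (at_right (node J (j - 1))) P = 0" using j by blast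
  then show ?thesis using nn2[OF j] by linarith
qed

lemma integral_zero_imp_zero_in_element:
  fixes P g :: "real \<Rightarrow> real"
  assumes J: "J > 0" and P: "pwc J P" and nn: "\<forall>x\<in>{0..1} - nodes J. 0 \<le> P x"
    and z: "integral {0..1} P = 0" and j: "j \<in> {1..J}"
    and g: "continuous_on {node J (j-1)..node J j} g" "\<forall>x\<in>{node J (j-1)<..<node J j}. P x = g x"
    and y: "y \<in> {node J (j-1)<..<node J j}"
  shows "g y = 0"
proof -
  define a where "a = node J (j-1)"
  define b where "b = node J j"
  have lt: "a < b" using node_less[OF J, of "j-1" j] j by (auto simp: a_def b_def)
  have sub: "{a..b} \<subseteq> {0..1}" using element_subset_unit[OF J j] by (simp add: a_def b_def)
  define P' where "P' x = (if x \<in> nodes J then 0 else P x)" for x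
  have iP: "P integrable_on {0..1}" by (rule pwc_integrable[OF J P])
  have iP': "P' integrable_on {0..1}"
    unfolding P'_def by (rule integrable_spike_nodes[OF iP])
  have "integral {0..1} P' = integral {0..1} P"
    by (rule integral_spike[of "nodes J"]) (auto intro: negligible_finite simp: P'_def)
  then have z': "integral {0..1} P' = 0" using z by simp
  have nn': "\<forall>x\<in>{0..1}. 0 \<le> P' x" using nn by (auto simp: P'_def)
  have iP'ab: "P' integrable_on {a..b}" by (rule integrable_subinterval_real[OF iP' sub])
  have "integral {a..b} P' \<le> integral {0..1} P'"
    by (rule integral_subset_le[OF sub iP'ab iP' nn'])
  moreover have "0 \<le> integral {a..b} P'" by (rule integral_nonneg[OF iP'ab]) (use nn' sub in auto)
  ultimately have zab: "integral {a..b} P' = 0" using z' by simp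
  define g' where "g' x = max 0 (g x)" for x
  have cg': "continuous_on {a..b} g'" unfolding g'_def a_def b_def
    by (intro continuous_intros g(1))
  have eqo: "\<forall>x\<in>{a<..<b}. P' x = g' x \<and> P x = g x \<and> 0 \<le> g x"
  proof
    fix x assume x: "x \<in> {a<..<b}"
    have "x \<notin> nodes J" "x \<in> {0..1}" using open_element_not_node[OF J j] x by (auto simp: a_def b_def)
    moreover have "P x = g x" using g(2) x by (auto simp: a_def b_def)
    moreover have "0 \<le> P x" using nn \<open>x \<notin> nodes J\<close> \<open>x \<in> {0..1}\<close> by auto
    ultimately show "P' x = g' x \<and> P x = g x \<and> 0 \<le> g x" by (auto simp: P'_def g'_def)
  qed
  have "integral {a..b} g' = integral {a..b} P'"
    by (rule integral_spike[of "{a,b}"]) (use eqo in \<open>auto intro: negligible_finite\<close>)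
  then have "(g' has_integral 0) {a..b}"
    using zab integrable_integral[OF integrable_continuous_interval[OF cg']] by simp
  then have "g' y = 0"
    using has_integral_0_cbox_imp_0[of "a" "b" g' y] cg' lt y
    by (auto simp: g'_def a_def b_def)
  then show "g y = 0" using eqo y by (auto simp: g'_def a_def b_def)
qed

lemma pwc_divide_const: "pwc J f \<Longrightarrow> pwc J (\<lambda>x. f x / (c::real))"
  using pwc_mult[OF _ pwc_const, of J f "1/c"] by simp

lemmas pwc_intros = pwc_add pwc_diff pwc_mult pwc_scaleR pwc_inner pwc_const pwc_divide_const

lemma quad_add:
  assumes J: "J > 0" and P: "pwc J P" "pwc J Q" and eq: "\<forall>x\<in>{0..1} - nodes J. R x = P x + Q x"
  shows "quad lumped J R = quad lumped J P + quad lumped J Q"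
  using quad_sum[OF J, of "{0::nat,1}" "\<lambda>l. if l = 0 then P else Q" R "\<lambda>_. 1" lumped] P eq by simp

lemma quad_diff:
  assumes J: "J > 0" and P: "pwc J P" "pwc J Q" and eq: "\<forall>x\<in>{0..1} - nodes J. R x = P x - Q x"
  shows "quad lumped J R = quad lumped J P - quad lumped J Q"
  using quad_sum[OF J, of "{0::nat,1}" "\<lambda>l. if l = 0 then P else Q" R "\<lambda>l. if l = 0 then 1 else -1" lumped] P eq by simp

lemma quad_lincomb2:
  assumes J: "J > 0" and P: "pwc J P" "pwc J Q" and eq: "\<forall>x\<in>{0..1} - nodes J. R x = a * P x + b * Q x"
  shows "quad lumped J R = a * quad lumped J P + b * quad lumped J Q"
  using quad_sum[OF J, of "{0::nat,1}" "\<lambda>l. if l = 0 then P else Q" R "\<lambda>l. if l = 0 then a else b" lumped] P eq by simp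

lemma quad_zero_imp_element_zero:
  fixes P g :: "real \<Rightarrow> real"
  assumes J: "J > 0" and P: "pwc J P" and nn: "\<forall>x\<in>{0..1} - nodes J. 0 \<le> P x"
    and z: "quad lumped J P = 0" and j: "j \<in> {1..J}"
    and g: "continuous_on {node J (j-1)..node J j} g" "\<forall>x\<in>{node J (j-1)<..<node J j}. P x = g x"
  shows "lumped \<Longrightarrow> g (node J (j-1)) = 0 \<and> g (node J j) = 0"
    and "\<not> lumped \<Longrightarrow> \<forall>y\<in>{node J (j-1)<..<node J j}. g y = 0"
proof -
  assume lumped
  then have "Lim (at_left (node J j)) P = 0 \<and> Lim (at_right (node J (j-1))) P = 0"
    using lumped_quad_zero_imp_ends_zero[OF J P nn _ j] z by simp
  then show "g (node J (j-1)) = 0 \<and> g (node J j) = 0" using element_Lim_ends[OF J j g] by simp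
next
  assume "\<not> lumped"
  then have "integral {0..1} P = 0" using z by (simp add: quad_def)
  then show "\<forall>y\<in>{node J (j-1)<..<node J j}. g y = 0"
    using integral_zero_imp_zero_in_element[OF J P nn _ j g] by blast
qed

lemma const_if_const_on_elements:
  assumes J: "J > 0" and const: "\<And>j. j \<in> {1..J} \<Longrightarrow> \<forall>x\<in>{node J (j-1)..node J j}. f x = f (node J j)"
  shows "\<forall>x\<in>{0..1}. f x = f 0"
proof -
  have at_nodes: "f (node J i) = f 0" if "i \<le> J" for i
    using that
  proof (induction i)
    case (Suc i)
    have "node J i \<in> {node J (Suc i - 1)..node J (Suc i)}" using node_le[OF J, of i "Suc i"] by simp
    moreover have "Suc i \<in> {1..J}" using Suc.prems by simp
    ultimately have "f (node J i) = f (node J (Suc i))" using const by blast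
    then show ?case using Suc by simp
  qed simp
  show ?thesis
  proof
    fix x :: real assume "x \<in> {0..1}"
    then obtain j where j: "j \<in> {1..J}" "x \<in> {node J (j-1)..node J j}" using elements_cover[OF J] by blast
    then have "f x = f (node J j)" using const[OF j(1)] by blast
    then show "f x = f 0" using at_nodes[of j] j(1) by simp
  qed
qed

lemma affine_zero_if_two_zeros:
  fixes f :: "real \<Rightarrow> 'a::real_vector"
  assumes f: "\<forall>x\<in>{a..b}. f x = A + x *\<^sub>R B" and y: "y1 \<in> {a..b}" "y2 \<in> {a..b}" "y1 \<noteq> y2"
    and z: "f y1 = 0" "f y2 = 0"
  shows "\<forall>x\<in>{a..b}. f x = 0"
proof -
  have "A + y1 *\<^sub>R B = 0" "A + y2 *\<^sub>R B = 0" using f y z by auto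
  moreover have "(y1 - y2) *\<^sub>R B = (A + y1 *\<^sub>R B) - (A + y2 *\<^sub>R B)" by (simp add: algebra_simps)
  ultimately have "(y1 - y2) *\<^sub>R B = 0" by simp
  then have "B = 0" using y(3) by simp
  then have "A = 0" using \<open>A + y1 *\<^sub>R B = 0\<close> by simp
  then show ?thesis using f \<open>B = 0\<close> by simp
qed

section \<open>Finite element spaces\<close>

lemma inner_e1: "(x::real\<times>real) \<bullet> e1 = fst x" by (cases x) (simp add: e1_def)

lemma inner_e2: "(x::real\<times>real) \<bullet> e2 = snd x" by (cases x) (simp add: e2_def)

lemma Vh_affine: "f \<in> Vh J per \<Longrightarrow> j \<in> {1..J} \<Longrightarrow> \<exists>a b. \<forall>x\<in>{node J (j-1)..node J j}. f x = a + b * x"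
  unfolding Vh_def by blast

lemma Vh_cont: "f \<in> Vh J per \<Longrightarrow> continuous_on {0..1} f"
  unfolding Vh_def by blast

lemma Vh_per: "f \<in> Vh J per \<Longrightarrow> per \<Longrightarrow> f 0 = f 1"
  unfolding Vh_def by blast

lemma Vh_I: "continuous_on {0..1} f \<Longrightarrow> (\<And>j. j \<in> {1..J} \<Longrightarrow> \<exists>a b. \<forall>x\<in>{node J (j-1)..node J j}. f x = a + b * x)
   \<Longrightarrow> (per \<Longrightarrow> f 0 = f 1) \<Longrightarrow> f \<in> Vh J per"
  unfolding Vh_def by blast

lemma Vh_const: "(\<lambda>x. c) \<in> Vh J per"
proof (rule Vh_I)
  fix j show "\<exists>a b. \<forall>x\<in>{node J (j-1)..node J j}. c = a + b * x"
    by (rule exI[of _ c], rule exI[of _ 0]) simp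
qed auto

lemma Vh_add: "f \<in> Vh J per \<Longrightarrow> g \<in> Vh J per \<Longrightarrow> (\<lambda>x. f x + g x) \<in> Vh J per"
proof (rule Vh_I)
  fix j assume f: "f \<in> Vh J per" and g: "g \<in> Vh J per" and j: "j \<in> {1..J}"
  obtain a b where ab: "\<forall>x\<in>{node J (j-1)..node J j}. f x = a + b * x" using Vh_affine[OF f j] by blast
  obtain c d where cd: "\<forall>x\<in>{node J (j-1)..node J j}. g x = c + d * x" using Vh_affine[OF g j] by blast
  show "\<exists>a b. \<forall>x\<in>{node J (j-1)..node J j}. f x + g x = a + b * x"
    using ab cd by (intro exI[of _ "a + c"] exI[of _ "b + d"]) (auto simp: algebra_simps)
qed (auto simp: Vh_per intro: continuous_on_add Vh_cont)

lemma Vh_scale: "f \<in> Vh J per \<Longrightarrow> (\<lambda>x. c * f x) \<in> Vh J per"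
proof (rule Vh_I)
  fix j assume f: "f \<in> Vh J per" and j: "j \<in> {1..J}"
  obtain a b where ab: "\<forall>x\<in>{node J (j-1)..node J j}. f x = a + b * x" using Vh_affine[OF f j] by blast
  show "\<exists>a b. \<forall>x\<in>{node J (j-1)..node J j}. c * f x = a + b * x"
    using ab by (intro exI[of _ "c * a"] exI[of _ "c * b"]) (auto simp: algebra_simps)
qed (auto simp: Vh_per intro: continuous_on_mult continuous_on_const Vh_cont)

lemma Vh_sum: "finite L \<Longrightarrow> (\<And>l. l \<in> L \<Longrightarrow> f l \<in> Vh J per) \<Longrightarrow> (\<lambda>x. \<Sum>l\<in>L. f l x) \<in> Vh J per"
proof (induction L rule: finite_induct)
  case empty then show ?case using Vh_const[of 0] by simp
next
  case (insert a F) then show ?case using Vh_add[of "f a" J per "\<lambda>x. \<Sum>l\<in>F. f l x"] by simp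
qed

lemma VVh_iff: "X \<in> VVh J per \<longleftrightarrow> (\<lambda>x. fst (X x)) \<in> Vh J per \<and> (\<lambda>x. snd (X x)) \<in> Vh J per"
  by (simp add: VVh_def inner_e1 inner_e2)

lemma VVh_affine:
  assumes "X \<in> VVh J per" "j \<in> {1..J}"
  shows "\<exists>A B. \<forall>x\<in>{node J (j-1)..node J j}. X x = A + x *\<^sub>R B"
proof -
  obtain a b where ab: "\<forall>x\<in>{node J (j-1)..node J j}. fst (X x) = a + b * x"
    using Vh_affine[of "\<lambda>x. fst (X x)" J per j] assms by (auto simp: VVh_iff)
  obtain c d where cd: "\<forall>x\<in>{node J (j-1)..node J j}. snd (X x) = c + d * x"
    using Vh_affine[of "\<lambda>x. snd (X x)" J per j] assms by (auto simp: VVh_iff)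
  show ?thesis using ab cd by (intro exI[of _ "(a,c)"] exI[of _ "(b,d)"]) (auto simp: prod_eq_iff)
qed

lemma VVh_cont: "X \<in> VVh J per \<Longrightarrow> continuous_on {0..1} X"
proof -
  assume "X \<in> VVh J per"
  then have "continuous_on {0..1} (\<lambda>x. (fst (X x), snd (X x)))"
    by (intro continuous_on_Pair) (auto simp: VVh_iff intro: Vh_cont)
  then show ?thesis by simp
qed

lemma VVh_zero: "(\<lambda>x. 0) \<in> VVh J per"
  using Vh_const[of 0] by (simp add: VVh_iff)

lemma VVh_add: "X \<in> VVh J per \<Longrightarrow> Y \<in> VVh J per \<Longrightarrow> (\<lambda>x. X x + Y x) \<in> VVh J per"
  by (simp add: VVh_iff Vh_add)

lemma VVh_scale: "X \<in> VVh J per \<Longrightarrow> (\<lambda>x. c *\<^sub>R X x) \<in> VVh J per"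
  by (simp add: VVh_iff Vh_scale)

lemma VVh_sum: "finite L \<Longrightarrow> (\<And>l. l \<in> L \<Longrightarrow> X l \<in> VVh J per) \<Longrightarrow> (\<lambda>x. \<Sum>l\<in>L. X l x) \<in> VVh J per"
proof (induction L rule: finite_induct)
  case empty then show ?case using VVh_zero by simp
next
  case (insert a F) then show ?case using VVh_add[of "X a" J per "\<lambda>x. \<Sum>l\<in>F. X l x"] by simp
qed

lemma VVh_fun_vec: "f \<in> Vh J per \<Longrightarrow> (\<lambda>x. f x *\<^sub>R v) \<in> VVh J per"
  using Vh_scale[of f J per "fst v"] Vh_scale[of f J per "snd v"] by (simp add: VVh_iff mult.commute)

lemma pwc_VVh: "J > 0 \<Longrightarrow> X \<in> VVh J per \<Longrightarrow> pwc J X"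
  by (rule pwc_cont) (auto intro: VVh_cont)

lemma pwc_Vh: "J > 0 \<Longrightarrow> f \<in> Vh J per \<Longrightarrow> pwc J f"
  by (rule pwc_cont) (auto intro: Vh_cont)

lemma VVh_affine_on_element:
  assumes J: "J > 0" and X: "X \<in> VVh J per" and j: "j \<in> {1..J}"
  shows "\<exists>A B. (\<forall>x\<in>{node J (j-1)..node J j}. X x = A + x *\<^sub>R B) \<and>
     (\<forall>x\<in>{node J (j-1)<..<node J j}. (X has_vector_derivative B) (at x) \<and> drho X x = B)"
proof -
  obtain A B where AB: "\<forall>x\<in>{node J (j-1)..node J j}. X x = A + x *\<^sub>R B" using VVh_affine[OF X j] by blast
  have "(X has_vector_derivative B) (at x)" if x: "x \<in> {node J (j-1)<..<node J j}" for x
  proof -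
    have "((\<lambda>y. A + y *\<^sub>R B) has_vector_derivative B) (at x)"
      by (auto intro!: derivative_eq_intros)
    then show ?thesis
      by (rule has_vector_derivative_transform_within_open[of _ _ _ "{node J (j-1)<..<node J j}"])
         (use x AB in auto)
  qed
  then show ?thesis using AB unfolding drho_def
    by (intro exI[of _ A] exI[of _ B]) (auto intro: vector_derivative_at)
qed

lemma VVh_has_vector_derivative:
  assumes J: "J > 0" and X: "X \<in> VVh J per" and x: "x \<in> {0..1} - nodes J"
  shows "(X has_vector_derivative drho X x) (at x)"
proof -
  obtain j where j: "j \<in> {1..J}" "x \<in> {node J (j-1)<..<node J j}" using open_elements_cover[OF J] x by blast
  then show ?thesis using VVh_affine_on_element[OF J X j(1)] by auto
qed

lemma pwc_drho: assumes J: "J > 0" and X: "X \<in> VVh J per" shows "pwc J (drho X)"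
proof (rule pwc_locally_const)
  fix j assume j: "j \<in> {1..J}"
  obtain A B where "\<forall>x\<in>{node J (j-1)<..<node J j}. (X has_vector_derivative B) (at x) \<and> drho X x = B"
    using VVh_affine_on_element[OF J X j] by blast
  then show "\<exists>v. \<forall>x\<in>{node J (j-1)<..<node J j}. drho X x = v" by blast
qed

lemma drho_cong_open_unit:
  assumes eq: "\<forall>y\<in>{0<..<1}. X y = Y y" and x: "x \<in> {0<..<1}"
  shows "drho X x = drho Y x"
proof -
  have "(X has_vector_derivative f') (at x) \<longleftrightarrow> (Y has_vector_derivative f') (at x)" for f'
    using has_vector_derivative_transform_within_open[of X f' x "{0<..<1}" Y]
      has_vector_derivative_transform_within_open[of Y f' x "{0<..<1}" X] eq x by auto
  then show ?thesis unfolding drho_def vector_derivative_def by simp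
qed

lemma non_node_in_open_unit: "J > 0 \<Longrightarrow> x \<in> {0..1} - nodes J \<Longrightarrow> x \<in> {0<..<1}"
proof -
  assume J: "J > 0" and x: "x \<in> {0..1} - nodes J"
  have "0 \<in> nodes J" "1 \<in> nodes J" using J unfolding nodes_def
    by (metis atMost_iff image_eqI le0 node_0, metis atMost_iff image_eqI order_refl node_J)
  then show ?thesis using x by (auto simp: less_le)
qed

lemma drho_sum:
  assumes J: "J > 0" and L: "finite L" and X: "\<And>l. l \<in> L \<Longrightarrow> X l \<in> VVh J per"
    and x: "x \<in> {0..1} - nodes J"
  shows "drho (\<lambda>y. \<Sum>l\<in>L. c l *\<^sub>R X l y) x = (\<Sum>l\<in>L. c l *\<^sub>R drho (X l) x)"
proof -
  have "((\<lambda>y. \<Sum>l\<in>L. c l *\<^sub>R X l y) has_vector_derivative (\<Sum>l\<in>L. c l *\<^sub>R drho (X l) x)) (at x)"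
    by (intro has_vector_derivative_sum bounded_linear.has_vector_derivative[OF bounded_linear_scaleR_right] VVh_has_vector_derivative[OF J X x])
  then show ?thesis unfolding drho_def by (rule vector_derivative_at)
qed

lemma drho_add:
  assumes J: "J > 0" and X: "X \<in> VVh J per" "Y \<in> VVh J per" and x: "x \<in> {0..1} - nodes J"
  shows "drho (\<lambda>y. X y + Y y) x = drho X x + drho Y x"
  unfolding drho_def
  by (rule vector_derivative_at, intro has_vector_derivative_add)
     (use VVh_has_vector_derivative[OF J X(1) x] VVh_has_vector_derivative[OF J X(2) x] in \<open>auto simp: drho_def\<close>)

lemma VVh_d_VVh: "X \<in> VVh_d J per PD P0 P1 P2 \<Longrightarrow> X \<in> VVh J per"
  by (simp add: VVh_d_def VVh_d0_def)

lemma WW_sharp_VVh: "K \<in> WW_sharp lumped J per P0 \<Longrightarrow> K \<in> VVh J per"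
  by (auto simp: WW_sharp_def W_sharp_def VVh_def Wh_d0_def split: if_splits)

lemma VVh_d_lincomb:
  assumes "finite L" "\<And>l. l \<in> L \<Longrightarrow> c l = 0 \<or> X l \<in> VVh_d J per PD P0 P1 P2"
  shows "(\<lambda>x. \<Sum>l\<in>L. c l *\<^sub>R X l x) \<in> VVh_d J per PD P0 P1 P2"
proof -
  have V: "(\<lambda>x. \<Sum>l\<in>L. c l *\<^sub>R X l x) \<in> VVh J per"
  proof (rule VVh_sum[OF assms(1)])
    fix l assume l: "l \<in> L"
    show "(\<lambda>x. c l *\<^sub>R X l x) \<in> VVh J per"
      using assms(2)[OF l] VVh_zero VVh_scale[OF VVh_d_VVh] by auto
  qed
  have z: "\<And>l \<rho>. l \<in> L \<Longrightarrow> \<rho> \<in> P0 \<union> P1 \<Longrightarrow> (c l *\<^sub>R X l \<rho>) \<bullet> e1 = 0"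
    "\<And>l \<rho>. l \<in> L \<Longrightarrow> \<rho> \<in> P2 \<Longrightarrow> (c l *\<^sub>R X l \<rho>) \<bullet> e2 = 0"
    "\<And>l \<rho>. l \<in> L \<Longrightarrow> \<rho> \<in> PD \<Longrightarrow> c l *\<^sub>R X l \<rho> = 0"
    using assms(2) by (fastforce simp: VVh_d_def VVh_d0_def)+
  show ?thesis using V z
    by (auto simp: VVh_d_def VVh_d0_def inner_sum_left intro!: sum.neutral)
qed

lemma W_sharp_lincomb:
  assumes L: "finite L" and f: "\<And>l. l \<in> L \<Longrightarrow> c l = 0 \<or> f l \<in> W_sharp lumped J per P0"
  shows "(\<lambda>x. \<Sum>l\<in>L. c l * f l x) \<in> W_sharp lumped J per P0"
proof -
  have V: "f l \<in> Vh J per" if "f l \<in> W_sharp lumped J per P0" for l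
    using that by (auto simp: W_sharp_def Wh_d0_def split: if_splits)
  have S: "(\<lambda>x. \<Sum>l\<in>L. c l * f l x) \<in> Vh J per"
  proof (rule Vh_sum[OF L])
    fix l assume l: "l \<in> L"
    show "(\<lambda>x. c l * f l x) \<in> Vh J per"
      using f[OF l] V Vh_scale[of "f l" J per "c l"] Vh_const[of 0 J per] by auto
  qed
  show ?thesis
  proof (cases lumped)
    case False then show ?thesis using S by (simp add: W_sharp_def)
  next
    case True
    have "\<forall>\<rho>\<in>P0. (\<Sum>l\<in>L. c l * f l \<rho>) = 0"
    proof
      fix \<rho> assume \<rho>: "\<rho> \<in> P0"
      show "(\<Sum>l\<in>L. c l * f l \<rho>) = 0"
      proof (rule sum.neutral, rule ballI)
        fix l assume l: "l \<in> L"
        show "c l * f l \<rho> = 0" using f[OF l] \<rho> True by (auto simp: W_sharp_def Wh_d0_def)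
      qed
    qed
    then show ?thesis using S True by (simp add: W_sharp_def Wh_d0_def)
  qed
qed

lemma WW_sharp_lincomb:
  assumes L: "finite L" and K: "\<And>l. l \<in> L \<Longrightarrow> c l = 0 \<or> K l \<in> WW_sharp lumped J per P0"
  shows "(\<lambda>x. \<Sum>l\<in>L. c l *\<^sub>R K l x) \<in> WW_sharp lumped J per P0"
proof -
  have "(\<lambda>x. \<Sum>l\<in>L. c l * (K l x \<bullet> e1)) \<in> W_sharp lumped J per P0"
    by (rule W_sharp_lincomb[OF L]) (use K in \<open>auto simp: WW_sharp_def\<close>)
  moreover have "(\<lambda>x. \<Sum>l\<in>L. c l * (K l x \<bullet> e2)) \<in> W_sharp lumped J per P0"
    by (rule W_sharp_lincomb[OF L]) (use K in \<open>auto simp: WW_sharp_def\<close>)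
  ultimately show ?thesis by (simp add: WW_sharp_def inner_sum_left)
qed

lemma VVh_d_diff:
  "X \<in> VVh_d J per PD P0 P1 P2 \<Longrightarrow> Y \<in> VVh_d J per PD P0 P1 P2 \<Longrightarrow> (\<lambda>x. X x - Y x) \<in> VVh_d J per PD P0 P1 P2"
  using VVh_d_lincomb[of "{0::nat,1}" "\<lambda>l. if l = 0 then 1 else -1" "\<lambda>l. if l = 0 then X else Y"] by simp

lemma WW_sharp_diff:
  "X \<in> WW_sharp lumped J per P0 \<Longrightarrow> Y \<in> WW_sharp lumped J per P0 \<Longrightarrow> (\<lambda>x. X x - Y x) \<in> WW_sharp lumped J per P0"
  using WW_sharp_lincomb[of "{0::nat,1}" "\<lambda>l. if l = 0 then 1 else -1" "\<lambda>l. if l = 0 then X else Y"] by simp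

lemma W_sharp_scale: "f \<in> W_sharp lumped J per P0 \<Longrightarrow> (\<lambda>x. f x * a) \<in> W_sharp lumped J per P0"
  using Vh_scale[of f J per a] by (auto simp: W_sharp_def Wh_d0_def mult.commute split: if_splits)

definition hat :: "nat \<Rightarrow> nat \<Rightarrow> real \<Rightarrow> real" where
  "hat J i x = max 0 (1 - \<bar>real J * x - real i\<bar>)"

text \<open>In the periodic case node \<open>q\<^sub>J\<close> is identified with \<open>q\<^sub>0\<close>, so the basis function of
  \<open>q\<^sub>0\<close> also carries the half hat at 1.\<close>

definition hat_per :: "nat \<Rightarrow> bool \<Rightarrow> nat \<Rightarrow> real \<Rightarrow> real" where
  "hat_per J per i x = hat J i x + (if per \<and> i = 0 then hat J J x else 0)"

definition nnodes :: "nat \<Rightarrow> bool \<Rightarrow> nat" where "nnodes J per = (if per then J else Suc J)"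

lemma hat_node: "J > 0 \<Longrightarrow> hat J i (node J l) = (if i = l then 1 else 0)"
proof -
  assume J: "J > 0"
  have e: "real J * node J l = real l" using J by (simp add: node_def)
  show ?thesis
  proof (cases "i = l")
    case False
    then have "1 \<le> \<bar>real l - real i\<bar>" by linarith
    then show ?thesis using False by (simp add: hat_def e)
  qed (simp add: hat_def e)
qed

lemma hat_on_element:
  assumes J: "J > 0" and j: "j \<in> {1..J}" and x: "x \<in> {node J (j-1)..node J j}"
  shows "hat J i x = (if i = j - 1 then real j - real J * x else if i = j then real J * x - real j + 1 else 0)"
proof -
  have jr: "real (j - 1) = real j - 1" using j by auto
  have t: "real j - 1 \<le> real J * x" "real J * x \<le> real j"
    using x J jr by (auto simp: node_def field_simps)
  consider "i = j - 1" | "i = j" | "i < j - 1" | "i > j" by linarith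
  then show ?thesis
  proof cases
    case 1 then show ?thesis using t jr j by (auto simp: hat_def)
  next
    case 2 then show ?thesis using t j by (auto simp: hat_def)
  next
    case 3
    then have "real i \<le> real j - 2" using j by linarith
    then show ?thesis using t 3 by (auto simp: hat_def)
  next
    case 4
    then have "real j + 1 \<le> real i" by linarith
    then show ?thesis using t 4 by (auto simp: hat_def)
  qed
qed

lemma hat_Vh: assumes J: "J > 0" shows "hat J i \<in> Vh J False"
proof (rule Vh_I)
  show "continuous_on {0..1} (hat J i)" unfolding hat_def by (intro continuous_intros)
next
  fix j assume j: "j \<in> {1..J}"
  show "\<exists>a b. \<forall>x\<in>{node J (j-1)..node J j}. hat J i x = a + b * x"
  proof (cases "i = j - 1")
    case True then show ?thesis using hat_on_element[OF J j]
      by (intro exI[of _ "real j"] exI[of _ "- real J"]) auto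
  next
    case False
    show ?thesis
    proof (cases "i = j")
      case True then show ?thesis using hat_on_element[OF J j] False
        by (intro exI[of _ "1 - real j"] exI[of _ "real J"]) auto
    next
      case False2: False
      then show ?thesis using hat_on_element[OF J j] False
        by (intro exI[of _ 0] exI[of _ 0]) auto
    qed
  qed
qed simp

lemma hat_0: "J > 0 \<Longrightarrow> hat J i 0 = (if i = 0 then 1 else 0)"
  using hat_node[of J i 0] by simp

lemma hat_1: "J > 0 \<Longrightarrow> hat J i 1 = (if i = J then 1 else 0)"
  using hat_node[of J i J] by simp

lemma hat_per_Vh: assumes J: "J > 0" and i: "i < nnodes J per" shows "hat_per J per i \<in> Vh J per"
proof (cases per)
  case False
  then show ?thesis using hat_Vh[OF J, of i] by (simp add: hat_per_def[abs_def])
next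
  case True
  have iJ: "i < J" using i True by (simp add: nnodes_def)
  have v: "hat_per J per i \<in> Vh J False"
    using Vh_add[OF hat_Vh[OF J, of i] hat_Vh[OF J, of J]] hat_Vh[OF J, of i] Vh_const[of 0]
    unfolding hat_per_def[abs_def] using True by (cases "i = 0") auto
  have "hat_per J per i 0 = hat_per J per i 1"
    using J iJ True by (auto simp: hat_per_def hat_0 hat_1)
  then show ?thesis using v unfolding Vh_def by auto
qed

lemma hat_per_node:
  assumes J: "J > 0" and i: "i < nnodes J per" and l: "l < nnodes J per"
  shows "hat_per J per i (node J l) = (if i = l then 1 else 0)"
  using assms by (auto simp: hat_per_def hat_node nnodes_def split: if_splits)

lemma hat_per_boundary:
  assumes J: "J > 0" and np: "\<not> per" and \<rho>: "\<rho> \<in> {0, 1}" and i: "i < nnodes J per"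
    and nz: "hat_per J per i \<rho> \<noteq> 0"
  shows "\<rho> = node J i"
  using assms by (auto simp: hat_per_def hat_0 hat_1 nnodes_def split: if_splits)

lemma Vh_hat_expansion:
  assumes J: "J > 0" and f: "f \<in> Vh J per" and x: "x \<in> {0..1}"
  shows "f x = (\<Sum>i\<le>J. f (node J i) * hat J i x)"
proof -
  obtain j where j: "j \<in> {1..J}" "x \<in> {node J (j-1)..node J j}" using elements_cover[OF J x] by blast
  obtain a b where ab: "\<forall>y\<in>{node J (j-1)..node J j}. f y = a + b * y" using Vh_affine[OF f j(1)] by blast
  have jn: "j - 1 \<noteq> j" using j by auto
  have n1: "node J (j-1) \<in> {node J (j-1)..node J j}" "node J j \<in> {node J (j-1)..node J j}"
    using node_le[OF J, of "j-1" j] by auto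
  have "(\<Sum>i\<le>J. f (node J i) * hat J i x) =
        (\<Sum>i\<le>J. (if i = j - 1 then f (node J (j-1)) * (real j - real J * x) else 0) +
                 (if i = j then f (node J j) * (real J * x - real j + 1) else 0))"
    by (intro sum.cong refl) (use hat_on_element[OF J j] jn in auto)
  also have "\<dots> = f (node J (j-1)) * (real j - real J * x) + f (node J j) * (real J * x - real j + 1)"
    using j by (simp add: sum.distrib) (use j in linarith)
  also have "\<dots> = (a + b * (real (j-1) / real J)) * (real j - real J * x) + (a + b * (real j / real J)) * (real J * x - real j + 1)"
    using ab n1 by (simp add: node_def)
  also have "\<dots> = a + b * x"
    using J j by (simp add: of_nat_diff field_simps)
  also have "\<dots> = f x" using ab j by simp
  finally show ?thesis by simp
qed

lemma Vh_nodal_expansion: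
  assumes J: "J > 0" and f: "f \<in> Vh J per" and x: "x \<in> {0..1}"
  shows "f x = (\<Sum>i<nnodes J per. f (node J i) * hat_per J per i x)"
proof (cases per)
  case False
  then show ?thesis using Vh_hat_expansion[OF J f x] by (simp add: nnodes_def hat_per_def lessThan_Suc_atMost)
next
  case True
  have fJ: "f (node J J) = f (node J 0)" using Vh_per[OF f True] J by simp
  have "(\<Sum>i<nnodes J per. f (node J i) * hat_per J per i x) =
        (\<Sum>i<J. f (node J i) * hat J i x) + f (node J 0) * hat J J x"
  proof -
    have "(\<Sum>i<nnodes J per. f (node J i) * hat_per J per i x) =
        (\<Sum>i<J. f (node J i) * hat J i x + (if i = 0 then f (node J 0) * hat J J x else 0))"
      by (intro sum.cong) (auto simp: hat_per_def nnodes_def True distrib_left)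
    also have "\<dots> = (\<Sum>i<J. f (node J i) * hat J i x) + f (node J 0) * hat J J x"
      using J by (simp add: sum.distrib)
    finally show ?thesis .
  qed
  also have "\<dots> = (\<Sum>i\<le>J. f (node J i) * hat J i x)"
    using fJ by (simp add: lessThan_Suc_atMost[symmetric])
  finally show ?thesis using Vh_hat_expansion[OF J f x] by simp
qed

lemma VVh_nodal_expansion:
  assumes J: "J > 0" and X: "X \<in> VVh J per" and x: "x \<in> {0..1}"
  shows "X x = (\<Sum>i<nnodes J per. hat_per J per i x *\<^sub>R X (node J i))"
proof (rule prod_eqI)
  have "fst (X x) = (\<Sum>i<nnodes J per. fst (X (node J i)) * hat_per J per i x)"
    using Vh_nodal_expansion[OF J _ x, of "\<lambda>y. fst (X y)"] X by (simp add: VVh_iff)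
  then show "fst (X x) = fst (\<Sum>i<nnodes J per. hat_per J per i x *\<^sub>R X (node J i))"
    by (simp add: fst_sum mult.commute)
  have "snd (X x) = (\<Sum>i<nnodes J per. snd (X (node J i)) * hat_per J per i x)"
    using Vh_nodal_expansion[OF J _ x, of "\<lambda>y. snd (X y)"] X by (simp add: VVh_iff)
  then show "snd (X x) = snd (\<Sum>i<nnodes J per. hat_per J per i x *\<^sub>R X (node J i))"
    by (simp add: snd_sum mult.commute)
qed

lemma sum_blocks4: fixes M :: nat shows "(\<Sum>m<M*4. g m) = (\<Sum>i<M. g (i*4) + g (i*4+1) + g (i*4+2) + g (i*4+3))"
proof -
  have "(\<Sum>m<M*4. g m) = (\<Sum>i<M. sum g {i*4..<i*4+4})" by (rule sum.nat_group[symmetric])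
  also have "\<dots> = (\<Sum>i<M. g (i*4) + g (i*4+1) + g (i*4+2) + g (i*4+3))"
    by (intro sum.cong refl) (simp add: numeral_eq_Suc add.assoc)
  finally show ?thesis .
qed

lemma div_mod_4[simp]: "Suc (i*4) div 4 = i" "Suc (i*4) mod 4 = 1" "Suc (Suc (i*4)) div 4 = i"
  "Suc (Suc (i*4)) mod 4 = 2" "Suc (Suc (Suc (i*4))) div 4 = i" "Suc (Suc (Suc (i*4))) mod 4 = 3"
  "(i*4) div 4 = i" "(i*4) mod 4 = 0" "(i * 4 + 2) div 4 = i" "(i * 4 + 2) mod 4 = 2"
  "(i * 4 + 3) div 4 = i" "(i * 4 + 3) mod 4 = 3" "(i * 4 + 1) div 4 = i" "(i * 4 + 1) mod 4 = 1"
  for i :: nat by presburger+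

definition dirX :: "nat \<Rightarrow> real \<times> real" where "dirX k = (if k = 0 then e1 else if k = 1 then e2 else 0)"

definition dirK :: "nat \<Rightarrow> real \<times> real" where "dirK k = (if k = 2 then e1 else if k = 3 then e2 else 0)"

section \<open>The scheme in residual form\<close>

locale scheme_data =
  fixes lumped per :: bool and J :: nat and PD P0 P1 P2 :: "real set"
    and rh :: "real \<Rightarrow> real" and dt :: real and Xm :: "real \<Rightarrow> real \<times> real"
  assumes J_ge_3: "J \<ge> 3"
    and partition: "boundary_partition per PD P0 P1 P2"
    and Xm_VVh_d0: "Xm \<in> VVh_d0 J per P0"
    and speed_pos_ae: "AE x in lborel. x \<in> {0<..<1} \<longrightarrow> norm (drho Xm x) > 0"
    and rad_pos_off_P0: "\<forall>\<rho>\<in>{0..1} - P0. Xm \<rho> \<bullet> e1 > 0"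
    and dt: "dt > 0"
begin

lemma J_pos: "J > 0" using J_ge_3 by simp

lemma Xm_VVh: "Xm \<in> VVh J per" using Xm_VVh_d0 by (simp add: VVh_d0_def)

lemma boundary_subset: "PD \<subseteq> {0,1}" "P0 \<subseteq> {0,1}" "P1 \<subseteq> {0,1}" "P2 \<subseteq> {0,1}"
  using partition by (auto simp: boundary_partition_def bdry_def split: if_splits)

lemma periodic_no_boundary: "per \<Longrightarrow> PD = {} \<and> P0 = {} \<and> P1 = {} \<and> P2 = {}"
  using partition by (auto simp: boundary_partition_def bdry_def)

definition rad :: "real \<Rightarrow> real" where "rad x = Xm x \<bullet> e1"

definition speed :: "real \<Rightarrow> real" where "speed x = norm (drho Xm x)"

lemma rad_pos: "x \<in> {0<..<1} \<Longrightarrow> rad x > 0"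
  using rad_pos_off_P0 boundary_subset(2) by (auto simp: rad_def)

lemma rad_nonneg: "x \<in> {0..1} \<Longrightarrow> rad x \<ge> 0"
proof -
  assume x: "x \<in> {0..1}"
  show ?thesis
  proof (cases "x \<in> P0")
    case True then show ?thesis using Xm_VVh_d0 by (auto simp: rad_def VVh_d0_def)
  next
    case False then show ?thesis using rad_pos_off_P0 x by (auto simp: rad_def less_imp_le)
  qed
qed

lemma continuous_rad: "continuous_on {0..1} rad"
  unfolding rad_def by (intro continuous_intros VVh_cont[OF Xm_VVh])

lemma pwc_rad: "pwc J rad" by (rule pwc_cont[OF J_pos continuous_rad])

lemma drho_Xm_element_const:
  assumes j: "j \<in> {1..J}"
  shows "\<exists>w. w \<noteq> 0 \<and> (\<forall>x\<in>{node J (j-1)<..<node J j}. drho Xm x = w)"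
proof -
  obtain A B where AB: "\<forall>x\<in>{node J (j-1)<..<node J j}. (Xm has_vector_derivative B) (at x) \<and> drho Xm x = B"
    using VVh_affine_on_element[OF J_pos Xm_VVh j] by blast
  have "B \<noteq> 0"
  proof
    assume B0: "B = 0"
    let ?S = "{node J (j-1)<..<node J j}"
    have sub: "?S \<subseteq> {0<..<1}"
      using non_node_in_open_unit[OF J_pos] open_element_not_node[OF J_pos j] by blast
    have "AE x in lborel. x \<notin> ?S"
      using speed_pos_ae by eventually_elim (use AB B0 sub in auto)
    then have "?S \<in> null_sets lborel" by (subst AE_iff_null_sets) auto
    then have "emeasure lborel ?S = 0" by auto
    moreover have "node J (j-1) < node J j" using node_less[OF J_pos, of "j-1" j] j by auto
    ultimately show False by simp
  qed
  then show ?thesis using AB by blast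
qed

lemma speed_on_element:
  assumes j: "j \<in> {1..J}"
  obtains w where "w \<noteq> 0" "\<forall>x\<in>{node J (j-1)<..<node J j}. drho Xm x = w \<and> speed x = norm w"
  using drho_Xm_element_const[OF j] unfolding speed_def by auto

lemma pwc_speed: "pwc J speed"
  by (rule pwc_locally_const) (metis speed_on_element)

lemma pwc_inverse_speed: "pwc J (\<lambda>x. inverse (speed x))"
  by (rule pwc_locally_const) (metis speed_on_element)

definition eq1_density :: "(real \<Rightarrow> real \<times> real) \<Rightarrow> (real \<Rightarrow> real \<times> real) \<Rightarrow> real \<Rightarrow> real \<times> real" where
  "eq1_density \<delta> \<kappa> x = (rad x / dt * speed x) *\<^sub>R \<delta> x - (rad x * speed x) *\<^sub>R \<kappa> x"

definition eq1_form :: "(real \<Rightarrow> real \<times> real) \<Rightarrow> (real \<Rightarrow> real \<times> real) \<Rightarrow> (real \<Rightarrow> real \<times> real) \<Rightarrow> real" where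
  "eq1_form \<delta> \<kappa> ch = quad lumped J (\<lambda>x. eq1_density \<delta> \<kappa> x \<bullet> ch x)"

definition eq2_form :: "(real \<Rightarrow> real \<times> real) \<Rightarrow> (real \<Rightarrow> real \<times> real) \<Rightarrow> (real \<Rightarrow> real \<times> real) \<Rightarrow> real" where
  "eq2_form \<delta> \<kappa> \<eta> = quad lumped J (\<lambda>x. ((rad x * speed x) *\<^sub>R \<kappa> x) \<bullet> \<eta> x)
   + quad False J (\<lambda>x. ((rad x * inverse (speed x)) *\<^sub>R drho \<delta> x) \<bullet> drho \<eta> x)"

definition eq2_load :: "(real \<Rightarrow> real \<times> real) \<Rightarrow> real" where
  "eq2_load \<eta> = quad False J (\<lambda>x. (speed x *\<^sub>R e1) \<bullet> \<eta> x)
   + quad False J (\<lambda>x. ((rad x * inverse (speed x)) *\<^sub>R drho Xm x) \<bullet> drho \<eta> x)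
   + ((\<Sum>p\<in>P1. rh p * (Xm p \<bullet> e1) * (\<eta> p \<bullet> e2)) + (\<Sum>p\<in>P2. rh p * (Xm p \<bullet> e1) * (\<eta> p \<bullet> e1)))"

lemmas pwc_data = pwc_rad pwc_speed pwc_inverse_speed pwc_VVh[OF J_pos, where per=per] pwc_drho[OF J_pos, where per=per]

lemma scheme_eqs_iff_forms:
  assumes dX: "dX \<in> VVh J per" and K: "K \<in> VVh J per"
  shows "scheme_eqs lumped J per PD P0 P1 P2 rh dt Xm dX K \<longleftrightarrow>
    (\<forall>ch\<in>WW_sharp lumped J per P0. eq1_form dX K ch = 0) \<and>
    (\<forall>\<eta>\<in>VVh_d J per PD P0 P1 P2. eq2_form dX K \<eta> + eq2_load \<eta> = 0)"
proof -
  have e1: "quad lumped J (\<lambda>x. ((Xm x \<bullet> e1 / dt) *\<^sub>R (Xm x + dX x - Xm x)) \<bullet> (norm (drho Xm x) *\<^sub>R ch x))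
     = quad lumped J (\<lambda>x. ((Xm x \<bullet> e1) *\<^sub>R K x) \<bullet> (norm (drho Xm x) *\<^sub>R ch x))
     \<longleftrightarrow> eq1_form dX K ch = 0" if ch: "ch \<in> VVh J per" for ch
  proof -
    have "eq1_form dX K ch = quad lumped J (\<lambda>x. ((Xm x \<bullet> e1 / dt) *\<^sub>R (Xm x + dX x - Xm x)) \<bullet> (norm (drho Xm x) *\<^sub>R ch x))
       - quad lumped J (\<lambda>x. ((Xm x \<bullet> e1) *\<^sub>R K x) \<bullet> (norm (drho Xm x) *\<^sub>R ch x))"
      unfolding eq1_form_def
      by (rule quad_diff[OF J_pos])
        (auto simp: eq1_density_def rad_def speed_def inner_diff_left algebra_simps
          intro!: pwc_intros pwc_data dX K ch Xm_VVh pwc_add[OF pwc_VVh[OF J_pos Xm_VVh] pwc_VVh[OF J_pos dX]]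
          simp flip: speed_def rad_def)
    then show ?thesis by simp
  qed
  have e2: "quad lumped J (\<lambda>x. ((Xm x \<bullet> e1) *\<^sub>R K x) \<bullet> (norm (drho Xm x) *\<^sub>R \<eta> x))
        + integral {0..1} (\<lambda>x. (\<eta> x \<bullet> e1) * norm (drho Xm x))
        + integral {0..1} (\<lambda>x. ((Xm x \<bullet> e1) *\<^sub>R drho (\<lambda>x. Xm x + dX x) x) \<bullet> (inverse (norm (drho Xm x)) *\<^sub>R drho \<eta> x))
      = - ((\<Sum>p\<in>P1. rh p * (Xm p \<bullet> e1) * (\<eta> p \<bullet> e2)) + (\<Sum>p\<in>P2. rh p * (Xm p \<bullet> e1) * (\<eta> p \<bullet> e1)))
      \<longleftrightarrow> eq2_form dX K \<eta> + eq2_load \<eta> = 0" if \<eta>: "\<eta> \<in> VVh J per" for \<eta>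
  proof -
    have a: "quad lumped J (\<lambda>x. ((Xm x \<bullet> e1) *\<^sub>R K x) \<bullet> (norm (drho Xm x) *\<^sub>R \<eta> x))
       = quad lumped J (\<lambda>x. ((rad x * speed x) *\<^sub>R K x) \<bullet> \<eta> x)"
      by (rule quad_cong[OF J_pos]) (auto simp: rad_def speed_def)
    have b: "integral {0..1} (\<lambda>x. (\<eta> x \<bullet> e1) * norm (drho Xm x)) = quad False J (\<lambda>x. (speed x *\<^sub>R e1) \<bullet> \<eta> x)"
      by (simp add: quad_def speed_def inner_commute mult.commute)
    have c: "integral {0..1} (\<lambda>x. ((Xm x \<bullet> e1) *\<^sub>R drho (\<lambda>x. Xm x + dX x) x) \<bullet> (inverse (norm (drho Xm x)) *\<^sub>R drho \<eta> x))
      = quad False J (\<lambda>x. ((rad x * inverse (speed x)) *\<^sub>R drho dX x) \<bullet> drho \<eta> x)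
        + quad False J (\<lambda>x. ((rad x * inverse (speed x)) *\<^sub>R drho Xm x) \<bullet> drho \<eta> x)"
    proof -
      have "integral {0..1} (\<lambda>x. ((Xm x \<bullet> e1) *\<^sub>R drho (\<lambda>x. Xm x + dX x) x) \<bullet> (inverse (norm (drho Xm x)) *\<^sub>R drho \<eta> x))
        = quad False J (\<lambda>x. ((rad x) *\<^sub>R drho (\<lambda>x. Xm x + dX x) x) \<bullet> (inverse (speed x) *\<^sub>R drho \<eta> x))"
        by (simp add: quad_def rad_def speed_def)
      also have "\<dots> = quad False J (\<lambda>x. ((rad x * inverse (speed x)) *\<^sub>R drho dX x) \<bullet> drho \<eta> x)
        + quad False J (\<lambda>x. ((rad x * inverse (speed x)) *\<^sub>R drho Xm x) \<bullet> drho \<eta> x)"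
        by (rule quad_add[OF J_pos])
          (auto simp: drho_add[OF J_pos Xm_VVh dX] inner_add_left algebra_simps intro!: pwc_intros pwc_data dX \<eta> Xm_VVh)
      finally show ?thesis .
    qed
    show ?thesis unfolding a b c eq2_form_def eq2_load_def by (auto simp: algebra_simps)
  qed
  show ?thesis
    unfolding scheme_eqs_def Let_def ip_sharp_eq_quad
    using e1 e2 WW_sharp_VVh VVh_d_VVh by simp
qed

lemma drho_expansion:
  assumes L: "finite L" and Xs: "\<And>l. l \<in> L \<Longrightarrow> Xs l \<in> VVh J per"
    and eq: "\<forall>x\<in>{0..1}. X x = (\<Sum>l\<in>L. c l *\<^sub>R Xs l x)" and x: "x \<in> {0..1} - nodes J"
  shows "drho X x = (\<Sum>l\<in>L. c l *\<^sub>R drho (Xs l) x)"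
proof -
  have "drho X x = drho (\<lambda>y. \<Sum>l\<in>L. c l *\<^sub>R Xs l y) x"
    by (rule drho_cong_open_unit) (use eq non_node_in_open_unit[OF J_pos x] in auto)
  also have "\<dots> = (\<Sum>l\<in>L. c l *\<^sub>R drho (Xs l) x)" by (rule drho_sum[OF J_pos L Xs x])
  finally show ?thesis .
qed

lemma eq1_form_sum_unknowns:
  assumes L: "finite L" and V: "\<And>l. l \<in> L \<Longrightarrow> ds l \<in> VVh J per" "\<And>l. l \<in> L \<Longrightarrow> ks l \<in> VVh J per"
    and ch: "ch \<in> VVh J per"
    and e1: "\<forall>x\<in>{0..1}. d x = (\<Sum>l\<in>L. c l *\<^sub>R ds l x)" and e2: "\<forall>x\<in>{0..1}. k x = (\<Sum>l\<in>L. c l *\<^sub>R ks l x)"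
  shows "eq1_form d k ch = (\<Sum>l\<in>L. c l * eq1_form (ds l) (ks l) ch)"
  unfolding eq1_form_def
proof (rule quad_sum[OF J_pos L])
  fix l assume l: "l \<in> L"
  show "pwc J (\<lambda>x. eq1_density (ds l) (ks l) x \<bullet> ch x)"
    unfolding eq1_density_def by (intro pwc_intros pwc_data V[OF l] ch)
next
  show "\<forall>x\<in>{0..1} - nodes J. eq1_density d k x \<bullet> ch x = (\<Sum>l\<in>L. c l * (eq1_density (ds l) (ks l) x \<bullet> ch x))"
    using e1 e2 by (auto simp: eq1_density_def inner_diff_left inner_sum_left sum_distrib_left algebra_simps
        sum_subtractf[symmetric])
qed

lemma eq1_form_sum_test:
  assumes L: "finite L" and V: "\<And>l. l \<in> L \<Longrightarrow> chs l \<in> VVh J per"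
    and d: "d \<in> VVh J per" and k: "k \<in> VVh J per"
    and e: "\<forall>x\<in>{0..1}. ch x = (\<Sum>l\<in>L. c l *\<^sub>R chs l x)"
  shows "eq1_form d k ch = (\<Sum>l\<in>L. c l * eq1_form d k (chs l))"
  unfolding eq1_form_def
proof (rule quad_sum[OF J_pos L])
  fix l assume l: "l \<in> L"
  show "pwc J (\<lambda>x. eq1_density d k x \<bullet> chs l x)"
    unfolding eq1_density_def by (intro pwc_intros pwc_data V[OF l] d k)
next
  show "\<forall>x\<in>{0..1} - nodes J. eq1_density d k x \<bullet> ch x = (\<Sum>l\<in>L. c l * (eq1_density d k x \<bullet> chs l x))"
    using e by (auto simp: inner_sum_right algebra_simps)
qed

lemma eq2_form_sum_unknowns:
  assumes L: "finite L" and V: "\<And>l. l \<in> L \<Longrightarrow> ds l \<in> VVh J per" "\<And>l. l \<in> L \<Longrightarrow> ks l \<in> VVh J per"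
    and eta: "eta \<in> VVh J per"
    and e1: "\<forall>x\<in>{0..1}. d x = (\<Sum>l\<in>L. c l *\<^sub>R ds l x)" and e2: "\<forall>x\<in>{0..1}. k x = (\<Sum>l\<in>L. c l *\<^sub>R ks l x)"
  shows "eq2_form d k eta = (\<Sum>l\<in>L. c l * eq2_form (ds l) (ks l) eta)"
proof -
  have a: "quad lumped J (\<lambda>x. ((rad x * speed x) *\<^sub>R k x) \<bullet> eta x)
      = (\<Sum>l\<in>L. c l * quad lumped J (\<lambda>x. ((rad x * speed x) *\<^sub>R ks l x) \<bullet> eta x))"
  proof (rule quad_sum[OF J_pos L])
    fix l assume l: "l \<in> L"
    show "pwc J (\<lambda>x. ((rad x * speed x) *\<^sub>R ks l x) \<bullet> eta x)" by (intro pwc_intros pwc_data V[OF l] eta)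
  next
    show "\<forall>x\<in>{0..1} - nodes J. ((rad x * speed x) *\<^sub>R k x) \<bullet> eta x = (\<Sum>l\<in>L. c l * (((rad x * speed x) *\<^sub>R ks l x) \<bullet> eta x))"
      using e2 by (auto simp: inner_sum_left sum_distrib_left algebra_simps)
  qed
  have b: "quad False J (\<lambda>x. ((rad x * inverse (speed x)) *\<^sub>R drho d x) \<bullet> drho eta x)
      = (\<Sum>l\<in>L. c l * quad False J (\<lambda>x. ((rad x * inverse (speed x)) *\<^sub>R drho (ds l) x) \<bullet> drho eta x))"
  proof (rule quad_sum[OF J_pos L])
    fix l assume l: "l \<in> L"
    show "pwc J (\<lambda>x. ((rad x * inverse (speed x)) *\<^sub>R drho (ds l) x) \<bullet> drho eta x)" by (intro pwc_intros pwc_data V[OF l] eta)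
  next
    show "\<forall>x\<in>{0..1} - nodes J. ((rad x * inverse (speed x)) *\<^sub>R drho d x) \<bullet> drho eta x
        = (\<Sum>l\<in>L. c l * (((rad x * inverse (speed x)) *\<^sub>R drho (ds l) x) \<bullet> drho eta x))"
      using drho_expansion[OF L V(1) e1] by (auto simp: inner_sum_left sum_distrib_left algebra_simps)
  qed
  show ?thesis unfolding eq2_form_def a b by (simp add: sum.distrib distrib_left)
qed

lemma eq2_form_sum_test:
  assumes L: "finite L" and V: "\<And>l. l \<in> L \<Longrightarrow> es l \<in> VVh J per"
    and d: "d \<in> VVh J per" and k: "k \<in> VVh J per"
    and e: "\<forall>x\<in>{0..1}. eta x = (\<Sum>l\<in>L. c l *\<^sub>R es l x)"
  shows "eq2_form d k eta = (\<Sum>l\<in>L. c l * eq2_form d k (es l))"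
proof -
  have a: "quad lumped J (\<lambda>x. ((rad x * speed x) *\<^sub>R k x) \<bullet> eta x)
      = (\<Sum>l\<in>L. c l * quad lumped J (\<lambda>x. ((rad x * speed x) *\<^sub>R k x) \<bullet> es l x))"
  proof (rule quad_sum[OF J_pos L])
    fix l assume l: "l \<in> L"
    show "pwc J (\<lambda>x. ((rad x * speed x) *\<^sub>R k x) \<bullet> es l x)" by (intro pwc_intros pwc_data V[OF l] k)
  next
    show "\<forall>x\<in>{0..1} - nodes J. ((rad x * speed x) *\<^sub>R k x) \<bullet> eta x = (\<Sum>l\<in>L. c l * (((rad x * speed x) *\<^sub>R k x) \<bullet> es l x))"
      using e by (auto simp: inner_sum_right algebra_simps)
  qed
  have b: "quad False J (\<lambda>x. ((rad x * inverse (speed x)) *\<^sub>R drho d x) \<bullet> drho eta x)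
      = (\<Sum>l\<in>L. c l * quad False J (\<lambda>x. ((rad x * inverse (speed x)) *\<^sub>R drho d x) \<bullet> drho (es l) x))"
  proof (rule quad_sum[OF J_pos L])
    fix l assume l: "l \<in> L"
    show "pwc J (\<lambda>x. ((rad x * inverse (speed x)) *\<^sub>R drho d x) \<bullet> drho (es l) x)" by (intro pwc_intros pwc_data V[OF l] d)
  next
    show "\<forall>x\<in>{0..1} - nodes J. ((rad x * inverse (speed x)) *\<^sub>R drho d x) \<bullet> drho eta x
        = (\<Sum>l\<in>L. c l * (((rad x * inverse (speed x)) *\<^sub>R drho d x) \<bullet> drho (es l) x))"
      using drho_expansion[OF L V e] by (auto simp: inner_sum_right algebra_simps)
  qed
  show ?thesis unfolding eq2_form_def a b by (simp add: sum.distrib distrib_left)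
qed

lemma eq2_load_sum:
  assumes L: "finite L" and V: "\<And>l. l \<in> L \<Longrightarrow> es l \<in> VVh J per"
    and e: "\<forall>x\<in>{0..1}. eta x = (\<Sum>l\<in>L. c l *\<^sub>R es l x)"
  shows "eq2_load eta = (\<Sum>l\<in>L. c l * eq2_load (es l))"
proof -
  have a: "quad False J (\<lambda>x. (speed x *\<^sub>R e1) \<bullet> eta x) = (\<Sum>l\<in>L. c l * quad False J (\<lambda>x. (speed x *\<^sub>R e1) \<bullet> es l x))"
  proof (rule quad_sum[OF J_pos L])
    fix l assume l: "l \<in> L"
    show "pwc J (\<lambda>x. (speed x *\<^sub>R e1) \<bullet> es l x)" by (intro pwc_intros pwc_data V[OF l])
  next
    show "\<forall>x\<in>{0..1} - nodes J. (speed x *\<^sub>R e1) \<bullet> eta x = (\<Sum>l\<in>L. c l * ((speed x *\<^sub>R e1) \<bullet> es l x))"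
      using e by (auto simp: inner_sum_right algebra_simps)
  qed
  have b: "quad False J (\<lambda>x. ((rad x * inverse (speed x)) *\<^sub>R drho Xm x) \<bullet> drho eta x)
      = (\<Sum>l\<in>L. c l * quad False J (\<lambda>x. ((rad x * inverse (speed x)) *\<^sub>R drho Xm x) \<bullet> drho (es l) x))"
  proof (rule quad_sum[OF J_pos L])
    fix l assume l: "l \<in> L"
    show "pwc J (\<lambda>x. ((rad x * inverse (speed x)) *\<^sub>R drho Xm x) \<bullet> drho (es l) x)" by (intro pwc_intros pwc_data V[OF l] Xm_VVh)
  next
    show "\<forall>x\<in>{0..1} - nodes J. ((rad x * inverse (speed x)) *\<^sub>R drho Xm x) \<bullet> drho eta x
        = (\<Sum>l\<in>L. c l * (((rad x * inverse (speed x)) *\<^sub>R drho Xm x) \<bullet> drho (es l) x))"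
      using drho_expansion[OF L V e] by (auto simp: inner_sum_right algebra_simps)
  qed
  have P01: "P1 \<subseteq> {0..1}" "P2 \<subseteq> {0..1}" using boundary_subset by auto
  have c1: "(\<Sum>p\<in>P1. rh p * (Xm p \<bullet> e1) * (eta p \<bullet> e2)) = (\<Sum>l\<in>L. c l * (\<Sum>p\<in>P1. rh p * (Xm p \<bullet> e1) * (es l p \<bullet> e2)))"
  proof -
    have "(\<Sum>p\<in>P1. rh p * (Xm p \<bullet> e1) * (eta p \<bullet> e2)) = (\<Sum>p\<in>P1. \<Sum>l\<in>L. c l * (rh p * (Xm p \<bullet> e1) * (es l p \<bullet> e2)))"
      by (intro sum.cong refl) (use e P01 in \<open>auto simp: inner_sum_left sum_distrib_left algebra_simps\<close>)
    also have "\<dots> = (\<Sum>l\<in>L. \<Sum>p\<in>P1. c l * (rh p * (Xm p \<bullet> e1) * (es l p \<bullet> e2)))" by (rule sum.swap)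
    finally show ?thesis by (simp add: sum_distrib_left)
  qed
  have c2: "(\<Sum>p\<in>P2. rh p * (Xm p \<bullet> e1) * (eta p \<bullet> e1)) = (\<Sum>l\<in>L. c l * (\<Sum>p\<in>P2. rh p * (Xm p \<bullet> e1) * (es l p \<bullet> e1)))"
  proof -
    have "(\<Sum>p\<in>P2. rh p * (Xm p \<bullet> e1) * (eta p \<bullet> e1)) = (\<Sum>p\<in>P2. \<Sum>l\<in>L. c l * (rh p * (Xm p \<bullet> e1) * (es l p \<bullet> e1)))"
      by (intro sum.cong refl) (use e P01 in \<open>auto simp: inner_sum_left sum_distrib_left algebra_simps\<close>)
    also have "\<dots> = (\<Sum>l\<in>L. \<Sum>p\<in>P2. c l * (rh p * (Xm p \<bullet> e1) * (es l p \<bullet> e1)))" by (rule sum.swap)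
    finally show ?thesis by (simp add: sum_distrib_left)
  qed
  show ?thesis unfolding eq2_load_def a b c1 c2 by (simp add: sum.distrib distrib_left)
qed

lemma rad_node_pos: "l \<le> J \<Longrightarrow> node J l \<notin> P0 \<Longrightarrow> rad (node J l) > 0"
  using rad_pos_off_P0 node_in_unit[OF J_pos] by (auto simp: rad_def)

lemma WW_sharp_vanishes_P0: "k \<in> WW_sharp lumped J per P0 \<Longrightarrow> lumped \<Longrightarrow> \<rho> \<in> P0 \<Longrightarrow> k \<rho> = 0"
  by (auto simp: WW_sharp_def W_sharp_def Wh_d0_def inner_e1 inner_e2 prod_eq_iff)

lemma element_thirds:
  assumes j: "j \<in> {1..J}"
  shows "(2 * node J (j-1) + node J j) / 3 \<in> {node J (j-1)<..<node J j}"
    "(node J (j-1) + 2 * node J j) / 3 \<in> {node J (j-1)<..<node J j}"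
    "(2 * node J (j-1) + node J j) / 3 \<noteq> (node J (j-1) + 2 * node J j) / 3"
  using node_less[OF J_pos, of "j-1" j] j by auto

section \<open>Uniqueness\<close>

definition kappa_energy :: "(real \<Rightarrow> real \<times> real) \<Rightarrow> real \<Rightarrow> real" where
  "kappa_energy k x = rad x * speed x * (k x \<bullet> k x)"

definition stretch_energy :: "(real \<Rightarrow> real \<times> real) \<Rightarrow> real \<Rightarrow> real" where
  "stretch_energy d x = rad x * inverse (speed x) * (drho d x \<bullet> drho d x)"

lemma pwc_kappa_energy: "k \<in> VVh J per \<Longrightarrow> pwc J (kappa_energy k)"
  unfolding kappa_energy_def by (intro pwc_intros pwc_data)

lemma pwc_stretch_energy: "d \<in> VVh J per \<Longrightarrow> pwc J (stretch_energy d)"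
  unfolding stretch_energy_def by (intro pwc_intros pwc_data)

lemma kappa_energy_nonneg: "\<forall>x\<in>{0..1} - nodes J. 0 \<le> kappa_energy k x"
  using rad_nonneg by (auto simp: kappa_energy_def speed_def)

lemma stretch_energy_nonneg: "\<forall>x\<in>{0..1} - nodes J. 0 \<le> stretch_energy d x"
  using rad_nonneg by (auto simp: stretch_energy_def speed_def)

lemma homogeneous_energies_zero:
  assumes d: "d \<in> VVh J per" and k: "k \<in> VVh J per"
    and h1: "eq1_form d k k = 0" and h2: "eq2_form d k d = 0"
  shows "quad lumped J (kappa_energy k) = 0" "quad False J (stretch_energy d) = 0"
proof -
  define cross where "cross x = rad x * speed x * (d x \<bullet> k x)" for x
  have pwc_cross: "pwc J cross" unfolding cross_def by (intro pwc_intros pwc_data d k)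
  note pwc_kappa = pwc_kappa_energy[OF k] and pwc_stretch = pwc_stretch_energy[OF d]
  have "eq1_form d k k = (1/dt) * quad lumped J cross + (-1) * quad lumped J (kappa_energy k)"
    unfolding eq1_form_def
    by (rule quad_lincomb2[OF J_pos pwc_cross pwc_kappa])
      (auto simp: eq1_density_def cross_def kappa_energy_def inner_diff_left algebra_simps)
  then have "quad lumped J cross = dt * quad lumped J (kappa_energy k)" using h1 dt by (auto simp: field_simps)
  moreover have "eq2_form d k d = quad lumped J cross + quad False J (stretch_energy d)"
    unfolding eq2_form_def
    by (intro arg_cong2[where f="(+)"] quad_cong[OF J_pos])
      (auto simp: cross_def stretch_energy_def inner_commute)
  ultimately have "dt * quad lumped J (kappa_energy k) + quad False J (stretch_energy d) = 0"
    using h2 by simp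
  moreover have "0 \<le> quad lumped J (kappa_energy k)"
    by (rule quad_nonneg[OF J_pos pwc_kappa kappa_energy_nonneg])
  moreover have "0 \<le> quad False J (stretch_energy d)"
    by (rule quad_nonneg[OF J_pos pwc_stretch stretch_energy_nonneg])
  ultimately show "quad lumped J (kappa_energy k) = 0" "quad False J (stretch_energy d) = 0"
    using dt by (simp_all add: add_nonneg_eq_0_iff)
qed

lemma const_if_stretch_energy_zero:
  assumes d: "d \<in> VVh J per" and z: "quad False J (stretch_energy d) = 0"
  shows "\<forall>x\<in>{0..1}. d x = d 0"
proof (rule const_if_const_on_elements[OF J_pos])
  fix j assume j: "j \<in> {1..J}"
  obtain A B where AB: "\<forall>x\<in>{node J (j-1)..node J j}. d x = A + x *\<^sub>R B"
    "\<forall>x\<in>{node J (j-1)<..<node J j}. (d has_vector_derivative B) (at x) \<and> drho d x = B"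
    using VVh_affine_on_element[OF J_pos d j] by blast
  obtain w where w: "w \<noteq> 0" "\<forall>x\<in>{node J (j-1)<..<node J j}. drho Xm x = w \<and> speed x = norm w"
    using speed_on_element[OF j] by blast
  define g where "g x = rad x * inverse (norm w) * (B \<bullet> B)" for x
  have "continuous_on {node J (j-1)..node J j} g"
    unfolding g_def by (intro continuous_intros continuous_on_subset[OF continuous_rad element_subset_unit[OF J_pos j]])
  moreover have "\<forall>x\<in>{node J (j-1)<..<node J j}. stretch_energy d x = g x"
    using AB(2) w(2) by (auto simp: stretch_energy_def g_def)
  ultimately have "\<forall>y\<in>{node J (j-1)<..<node J j}. g y = 0"
    using quad_zero_imp_element_zero(2)[OF J_pos pwc_stretch_energy[OF d] stretch_energy_nonneg z j] by blast
  moreover obtain y where y: "y \<in> {node J (j-1)<..<node J j}" using element_thirds(1)[OF j] by blast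
  moreover have "rad y > 0"
    using rad_pos non_node_in_open_unit[OF J_pos] open_element_not_node[OF J_pos j y] by auto
  ultimately have "B = 0" using w(1) by (auto simp: g_def)
  then show "\<forall>x\<in>{node J (j-1)..node J j}. d x = d (node J j)"
    using AB(1) node_le[OF J_pos, of "j-1" j] j by auto
qed

lemma zero_if_kappa_energy_zero:
  assumes k: "k \<in> WW_sharp lumped J per P0" and z: "quad lumped J (kappa_energy k) = 0"
  shows "\<forall>x\<in>{0..1}. k x = 0"
proof -
  have kV: "k \<in> VVh J per" using k by (rule WW_sharp_VVh)
  have "\<forall>x\<in>{node J (j-1)..node J j}. k x = 0" if j: "j \<in> {1..J}" for j
  proof -
    obtain A B where AB: "\<forall>x\<in>{node J (j-1)..node J j}. k x = A + x *\<^sub>R B"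
      using VVh_affine_on_element[OF J_pos kV j] by blast
    obtain w where w: "w \<noteq> 0" "\<forall>x\<in>{node J (j-1)<..<node J j}. drho Xm x = w \<and> speed x = norm w"
      using speed_on_element[OF j] by blast
    define g where "g x = rad x * norm w * (k x \<bullet> k x)" for x
    have cg: "continuous_on {node J (j-1)..node J j} g"
      unfolding g_def by (intro continuous_intros continuous_on_subset[OF continuous_rad element_subset_unit[OF J_pos j]]
          continuous_on_subset[OF VVh_cont[OF kV] element_subset_unit[OF J_pos j]])
    have eg: "\<forall>x\<in>{node J (j-1)<..<node J j}. kappa_energy k x = g x"
      using w(2) by (auto simp: kappa_energy_def g_def)
    note g_zero = quad_zero_imp_element_zero[OF J_pos pwc_kappa_energy[OF kV] kappa_energy_nonneg z j cg eg]
    show ?thesis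
    proof (cases lumped)
      case True
      \<comment> \<open>the radius vanishes on \<open>P0\<close>, but there so does \<open>k\<close>\<close>
      have "k (node J l) = 0" if l: "l \<le> J" and gl: "g (node J l) = 0" for l
      proof (cases "node J l \<in> P0")
        case True then show ?thesis using WW_sharp_vanishes_P0[OF k \<open>lumped\<close>] by blast
      next
        case False
        then have "rad (node J l) > 0" using rad_node_pos l by blast
        then show ?thesis using gl w(1) by (simp add: g_def)
      qed
      then have "k (node J (j-1)) = 0" "k (node J j) = 0" using g_zero(1)[OF True] j by auto
      then show ?thesis
        by (intro affine_zero_if_two_zeros[OF AB, of "node J (j-1)" "node J j"])
          (use node_less[OF J_pos, of "j-1" j] j in auto)
    next
      case False
      have zy: "k y = 0" if y: "y \<in> {node J (j-1)<..<node J j}" for y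
      proof -
        have "rad y > 0" using rad_pos non_node_in_open_unit[OF J_pos] open_element_not_node[OF J_pos j y] by auto
        moreover have "g y = 0" using g_zero(2)[OF False] y by blast
        ultimately show ?thesis using w(1) by (simp add: g_def)
      qed
      show ?thesis
        by (rule affine_zero_if_two_zeros[OF AB _ _ element_thirds(3)[OF j]]) (use element_thirds[OF j] zy in auto)
    qed
  qed
  then show ?thesis using elements_cover[OF J_pos] by blast
qed

lemma hat_1_W_sharp: "hat J 1 \<in> W_sharp lumped J per P0"
proof -
  have "hat J 1 0 = 0" "hat J 1 1 = 0" using J_ge_3 by (simp_all add: hat_0[OF J_pos] hat_1[OF J_pos])
  then have "hat J 1 \<in> Vh J per" using hat_Vh[OF J_pos, of 1] unfolding Vh_def by auto
  moreover have "hat J 1 \<rho> = 0" if "\<rho> \<in> P0" for \<rho>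
    using that boundary_subset(2) \<open>hat J 1 0 = 0\<close> \<open>hat J 1 1 = 0\<close> by auto
  ultimately show ?thesis by (auto simp: W_sharp_def Wh_d0_def)
qed

lemma constant_displacement_zero:
  assumes dc: "\<forall>x\<in>{0..1}. d x = c" and k0: "\<forall>x\<in>{0..1}. k x = 0"
    and h1: "eq1_form d k (\<lambda>x. hat J 1 x *\<^sub>R c) = 0"
  shows "c = 0"
proof -
  define P where "P x = rad x / dt * speed x * hat J 1 x * (c \<bullet> c)" for x
  have pwc_P: "pwc J P" unfolding P_def by (intro pwc_intros pwc_data pwc_Vh[OF J_pos hat_Vh[OF J_pos]])
  have "0 \<le> hat J 1 x" for x by (simp add: hat_def)
  then have nn: "\<forall>x\<in>{0..1} - nodes J. 0 \<le> P x"
    using rad_nonneg dt unfolding P_def speed_def by (auto intro!: mult_nonneg_nonneg)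
  have "quad lumped J P = eq1_form d k (\<lambda>x. hat J 1 x *\<^sub>R c)"
    unfolding eq1_form_def
    by (rule quad_cong[OF J_pos]) (use dc k0 in \<open>auto simp: P_def eq1_density_def mult_ac\<close>)
  then have z: "quad lumped J P = 0" using h1 by simp
  have j1: "(1::nat) \<in> {1..J}" using J_ge_3 by auto
  obtain w where w: "w \<noteq> 0" "\<forall>x\<in>{node J (1-1)<..<node J 1}. drho Xm x = w \<and> speed x = norm w"
    using speed_on_element[OF j1] by blast
  define g where "g x = rad x / dt * norm w * hat J 1 x * (c \<bullet> c)" for x
  have cg: "continuous_on {node J (1-1)..node J 1} g"
    unfolding g_def hat_def
    by (intro continuous_intros continuous_on_subset[OF continuous_rad element_subset_unit[OF J_pos j1]]) (use dt in auto)
  have eg: "\<forall>x\<in>{node J (1-1)<..<node J 1}. P x = g x" using w(2) by (auto simp: P_def g_def)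
  note g_zero = quad_zero_imp_element_zero[OF J_pos pwc_P nn z j1 cg eg]
  have n1: "node J 1 \<in> {0<..<1}" using J_ge_3 by (auto simp: node_def)
  obtain y where "g y = 0" "rad y > 0" "hat J 1 y > 0"
  proof (cases lumped)
    case True
    have "g (node J 1) = 0" using g_zero(1)[OF True] by simp
    moreover have "rad (node J 1) > 0" using rad_pos n1 by blast
    moreover have "hat J 1 (node J 1) > 0" using hat_node[OF J_pos, of 1 1] by simp
    ultimately show ?thesis by (rule that)
  next
    case False
    define y where "y = node J 1 / 2"
    have y: "y \<in> {node J (1-1)<..<node J 1}" using n1 by (auto simp: y_def)
    have "g y = 0" using g_zero(2)[OF False] y by blast
    moreover have "rad y > 0" using rad_pos n1 y by auto
    moreover have "hat J 1 y > 0" using J_pos by (simp add: y_def hat_def node_def)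
    ultimately show ?thesis by (rule that)
  qed
  then show "c = 0" using w(1) dt by (simp add: g_def)
qed

lemma homogeneous_solution_zero:
  assumes d: "d \<in> VVh_d J per PD P0 P1 P2" and k: "k \<in> WW_sharp lumped J per P0"
    and h1: "\<forall>ch\<in>WW_sharp lumped J per P0. eq1_form d k ch = 0"
    and h2: "\<forall>eta\<in>VVh_d J per PD P0 P1 P2. eq2_form d k eta = 0"
  shows "\<forall>x\<in>{0..1}. d x = 0 \<and> k x = 0"
proof -
  have dV: "d \<in> VVh J per" using d by (rule VVh_d_VVh)
  note energies = homogeneous_energies_zero[OF dV WW_sharp_VVh[OF k] h1[rule_format, OF k] h2[rule_format, OF d]]
  have dc: "\<forall>x\<in>{0..1}. d x = d 0" by (rule const_if_stretch_energy_zero[OF dV energies(2)])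
  have k0: "\<forall>x\<in>{0..1}. k x = 0" by (rule zero_if_kappa_energy_zero[OF k energies(1)])
  have "(\<lambda>x. hat J 1 x *\<^sub>R d 0) \<in> WW_sharp lumped J per P0"
    using W_sharp_scale[OF hat_1_W_sharp, of "d 0 \<bullet> e1"] W_sharp_scale[OF hat_1_W_sharp, of "d 0 \<bullet> e2"]
    by (simp add: WW_sharp_def)
  then have "d 0 = 0" using constant_displacement_zero[OF dc k0] h1 by blast
  then show ?thesis using dc k0 by (metis (no_types))
qed

lemma eq_forms_diff:
  assumes "d \<in> VVh J per" "d' \<in> VVh J per" "k \<in> VVh J per" "k' \<in> VVh J per"
  shows "ch \<in> VVh J per \<Longrightarrow>
      eq1_form (\<lambda>x. d' x - d x) (\<lambda>x. k' x - k x) ch = eq1_form d' k' ch - eq1_form d k ch"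
    and "eta \<in> VVh J per \<Longrightarrow>
      eq2_form (\<lambda>x. d' x - d x) (\<lambda>x. k' x - k x) eta = eq2_form d' k' eta - eq2_form d k eta"
proof -
  define c where "c l = (if l = (0::nat) then 1 else (-1::real))" for l
  define ds where "ds l = (if l = (0::nat) then d' else d)" for l
  define ks where "ks l = (if l = (0::nat) then k' else k)" for l
  have V: "ds l \<in> VVh J per" "ks l \<in> VVh J per" for l using assms by (simp_all add: ds_def ks_def)
  have e: "\<forall>x\<in>{0..1}. d' x - d x = (\<Sum>l\<in>{0::nat,1}. c l *\<^sub>R ds l x)"
    "\<forall>x\<in>{0..1}. k' x - k x = (\<Sum>l\<in>{0::nat,1}. c l *\<^sub>R ks l x)"
    by (simp_all add: c_def ds_def ks_def)
  show "ch \<in> VVh J per \<Longrightarrow>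
      eq1_form (\<lambda>x. d' x - d x) (\<lambda>x. k' x - k x) ch = eq1_form d' k' ch - eq1_form d k ch"
    using eq1_form_sum_unknowns[OF _ V _ e] by (simp add: c_def ds_def ks_def)
  show "eta \<in> VVh J per \<Longrightarrow>
      eq2_form (\<lambda>x. d' x - d x) (\<lambda>x. k' x - k x) eta = eq2_form d' k' eta - eq2_form d k eta"
    using eq2_form_sum_unknowns[OF _ V _ e] by (simp add: c_def ds_def ks_def)
qed

lemma scheme_unique:
  assumes d1: "dX \<in> VVh_d J per PD P0 P1 P2" and k1: "K \<in> WW_sharp lumped J per P0"
    and s1: "scheme_eqs lumped J per PD P0 P1 P2 rh dt Xm dX K"
    and d2: "dX' \<in> VVh_d J per PD P0 P1 P2" and k2: "K' \<in> WW_sharp lumped J per P0"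
    and s2: "scheme_eqs lumped J per PD P0 P1 P2 rh dt Xm dX' K'"
  shows "\<forall>x\<in>{0..1}. dX' x = dX x \<and> K' x = K x"
proof -
  note diff = eq_forms_diff[OF VVh_d_VVh[OF d1] VVh_d_VVh[OF d2] WW_sharp_VVh[OF k1] WW_sharp_VVh[OF k2]]
  note forms1 = s1[unfolded scheme_eqs_iff_forms[OF VVh_d_VVh[OF d1] WW_sharp_VVh[OF k1]]]
  note forms2 = s2[unfolded scheme_eqs_iff_forms[OF VVh_d_VVh[OF d2] WW_sharp_VVh[OF k2]]]
  have "\<forall>ch\<in>WW_sharp lumped J per P0. eq1_form (\<lambda>x. dX' x - dX x) (\<lambda>x. K' x - K x) ch = 0"
    using diff(1)[OF WW_sharp_VVh] forms1 forms2 by simp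
  moreover have "\<forall>eta\<in>VVh_d J per PD P0 P1 P2. eq2_form (\<lambda>x. dX' x - dX x) (\<lambda>x. K' x - K x) eta = 0"
  proof
    fix eta assume eta: "eta \<in> VVh_d J per PD P0 P1 P2"
    then have "eq2_form dX' K' eta + eq2_load eta = 0" "eq2_form dX K eta + eq2_load eta = 0"
      using forms1 forms2 by auto
    then show "eq2_form (\<lambda>x. dX' x - dX x) (\<lambda>x. K' x - K x) eta = 0"
      using diff(2)[OF VVh_d_VVh[OF eta]] by simp
  qed
  ultimately have "\<forall>x\<in>{0..1}. dX' x - dX x = 0 \<and> K' x - K x = 0"
    using homogeneous_solution_zero[OF VVh_d_diff[OF d2 d1] WW_sharp_diff[OF k2 k1]] by blast
  then show ?thesis by simp
qed

section \<open>Existence\<close>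

text \<open>Degree of freedom \<open>m\<close> sits at node \<open>m div 4\<close>; the residues 0, 1 of \<open>m mod 4\<close>
  are the \<open>e\<^sub>1\<close>, \<open>e\<^sub>2\<close> components of \<open>\<delta>X\<close> and 2, 3 those of \<open>\<kappa>\<close>.\<close>

definition basisX :: "nat \<Rightarrow> real \<Rightarrow> real \<times> real" where
  "basisX m = (\<lambda>x. hat_per J per (m div 4) x *\<^sub>R dirX (m mod 4))"

definition basisK :: "nat \<Rightarrow> real \<Rightarrow> real \<times> real" where
  "basisK m = (\<lambda>x. hat_per J per (m div 4) x *\<^sub>R dirK (m mod 4))"

definition ndofs :: nat where "ndofs = nnodes J per * 4"

definition dof_node :: "nat \<Rightarrow> real" where "dof_node m = node J (m div 4)"

definition free_dof :: "nat \<Rightarrow> bool" where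
  "free_dof m \<longleftrightarrow> (m mod 4 = 0 \<longrightarrow> dof_node m \<notin> P0 \<union> P1 \<union> PD) \<and>
   (m mod 4 = 1 \<longrightarrow> dof_node m \<notin> P2 \<union> PD) \<and> (2 \<le> m mod 4 \<longrightarrow> lumped \<longrightarrow> dof_node m \<notin> P0)"

definition coordX :: "(real \<Rightarrow> real \<times> real) \<Rightarrow> nat \<Rightarrow> real" where
  "coordX eta m = eta (dof_node m) \<bullet> dirX (m mod 4)"

definition coordK :: "(real \<Rightarrow> real \<times> real) \<Rightarrow> nat \<Rightarrow> real" where
  "coordK ch m = ch (dof_node m) \<bullet> dirK (m mod 4)"

lemma dof_index_lt_nnodes: "m < ndofs \<Longrightarrow> m div 4 < nnodes J per" by (simp add: ndofs_def less_mult_imp_div_less)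

lemma basisX_VVh: "m < ndofs \<Longrightarrow> basisX m \<in> VVh J per"
  unfolding basisX_def by (intro VVh_fun_vec hat_per_Vh[OF J_pos] dof_index_lt_nnodes)

lemma basisK_VVh: "m < ndofs \<Longrightarrow> basisK m \<in> VVh J per"
  unfolding basisK_def by (intro VVh_fun_vec hat_per_Vh[OF J_pos] dof_index_lt_nnodes)

lemma hat_per_nonzero_boundary:
  assumes m: "m < ndofs" and \<rho>: "\<rho> \<in> PD \<union> P0 \<union> P1 \<union> P2" and nz: "hat_per J per (m div 4) \<rho> \<noteq> 0"
  shows "\<rho> = dof_node m"
proof -
  have np: "\<not> per" using periodic_no_boundary \<rho> by auto
  show ?thesis unfolding dof_node_def
    by (rule hat_per_boundary[OF J_pos np _ dof_index_lt_nnodes[OF m] nz]) (use boundary_subset \<rho> in auto)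
qed

lemma basisX_VVh_d: assumes m: "m < ndofs" and a: "free_dof m" shows "basisX m \<in> VVh_d J per PD P0 P1 P2"
proof -
  have k: "m mod 4 < 4" by simp
  have c1: "basisX m \<rho> \<bullet> e1 = 0" if "\<rho> \<in> P0 \<union> P1" for \<rho>
  proof (cases "hat_per J per (m div 4) \<rho> = 0")
    case False
    then have "\<rho> = dof_node m" using hat_per_nonzero_boundary[OF m] that by auto
    then show ?thesis using a that by (auto simp: basisX_def dirX_def free_dof_def e1_def e2_def)
  qed (simp add: basisX_def)
  have c2: "basisX m \<rho> \<bullet> e2 = 0" if "\<rho> \<in> P2" for \<rho>
  proof (cases "hat_per J per (m div 4) \<rho> = 0")
    case False
    then have "\<rho> = dof_node m" using hat_per_nonzero_boundary[OF m] that by auto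
    then show ?thesis using a that by (auto simp: basisX_def dirX_def free_dof_def e1_def e2_def)
  qed (simp add: basisX_def)
  have c3: "basisX m \<rho> = 0" if "\<rho> \<in> PD" for \<rho>
  proof (cases "hat_per J per (m div 4) \<rho> = 0")
    case False
    then have "\<rho> = dof_node m" using hat_per_nonzero_boundary[OF m] that by auto
    then show ?thesis using a that by (auto simp: basisX_def dirX_def free_dof_def e1_def e2_def)
  qed (simp add: basisX_def)
  show ?thesis using basisX_VVh[OF m] c1 c2 c3 by (auto simp: VVh_d_def VVh_d0_def)
qed

lemma basisK_WW_sharp: assumes m: "m < ndofs" and a: "free_dof m" shows "basisK m \<in> WW_sharp lumped J per P0"
proof -
  have h: "hat_per J per (m div 4) \<in> Vh J per" by (rule hat_per_Vh[OF J_pos dof_index_lt_nnodes[OF m]])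
  have a': "dof_node m \<notin> P0" if "2 \<le> m mod 4" "lumped" using a that unfolding free_dof_def by blast
  have z: "hat_per J per (m div 4) \<rho> * (dirK (m mod 4) \<bullet> e) = 0" if l: "lumped" and r: "\<rho> \<in> P0" for \<rho> e
  proof (cases "hat_per J per (m div 4) \<rho> = 0")
    case False
    then have "\<rho> = dof_node m" using hat_per_nonzero_boundary[OF m] r by auto
    then have "\<not> 2 \<le> m mod 4" using a' l r by auto
    then have "dirK (m mod 4) = 0" by (simp add: dirK_def)
    then show ?thesis by simp
  qed simp
  have "(\<lambda>x. hat_per J per (m div 4) x * (dirK (m mod 4) \<bullet> e)) \<in> W_sharp lumped J per P0" if "e = e1 \<or> e = e2" for e
    using Vh_scale[OF h, of "dirK (m mod 4) \<bullet> e"] z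
    by (auto simp: W_sharp_def Wh_d0_def mult.commute)
  then show ?thesis by (simp add: WW_sharp_def basisK_def)
qed

lemma dirX_expansion: "((v::real\<times>real) \<bullet> dirX 0) *\<^sub>R dirX 0 + (v \<bullet> dirX 1) *\<^sub>R dirX 1 + (v \<bullet> dirX 2) *\<^sub>R dirX 2 + (v \<bullet> dirX 3) *\<^sub>R dirX 3 = v"
  by (cases v) (simp add: dirX_def e1_def e2_def)

lemma dirK_expansion: "((v::real\<times>real) \<bullet> dirK 0) *\<^sub>R dirK 0 + (v \<bullet> dirK 1) *\<^sub>R dirK 1 + (v \<bullet> dirK 2) *\<^sub>R dirK 2 + (v \<bullet> dirK 3) *\<^sub>R dirK 3 = v"
  by (cases v) (simp add: dirK_def e1_def e2_def)

lemma basisX_expansion: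
  assumes eta: "eta \<in> VVh J per" and x: "x \<in> {0..1}"
  shows "eta x = (\<Sum>m<ndofs. coordX eta m *\<^sub>R basisX m x)"
proof -
  have "(\<Sum>m<ndofs. coordX eta m *\<^sub>R basisX m x) = (\<Sum>i<nnodes J per. hat_per J per i x *\<^sub>R
      ((eta (node J i) \<bullet> dirX 0) *\<^sub>R dirX 0 + (eta (node J i) \<bullet> dirX 1) *\<^sub>R dirX 1 + (eta (node J i) \<bullet> dirX 2) *\<^sub>R dirX 2 + (eta (node J i) \<bullet> dirX 3) *\<^sub>R dirX 3))"
    unfolding ndofs_def sum_blocks4 by (intro sum.cong refl) (simp add: coordX_def basisX_def dof_node_def scaleR_add_right mult.commute)
  also have "\<dots> = (\<Sum>i<nnodes J per. hat_per J per i x *\<^sub>R eta (node J i))" by (simp only: dirX_expansion)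
  finally show ?thesis using VVh_nodal_expansion[OF J_pos eta x] by simp
qed

lemma basisK_expansion:
  assumes ch: "ch \<in> VVh J per" and x: "x \<in> {0..1}"
  shows "ch x = (\<Sum>m<ndofs. coordK ch m *\<^sub>R basisK m x)"
proof -
  have "(\<Sum>m<ndofs. coordK ch m *\<^sub>R basisK m x) = (\<Sum>i<nnodes J per. hat_per J per i x *\<^sub>R
      ((ch (node J i) \<bullet> dirK 0) *\<^sub>R dirK 0 + (ch (node J i) \<bullet> dirK 1) *\<^sub>R dirK 1 + (ch (node J i) \<bullet> dirK 2) *\<^sub>R dirK 2 + (ch (node J i) \<bullet> dirK 3) *\<^sub>R dirK 3))"
    unfolding ndofs_def sum_blocks4 by (intro sum.cong refl) (simp add: coordK_def basisK_def dof_node_def scaleR_add_right mult.commute)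
  also have "\<dots> = (\<Sum>i<nnodes J per. hat_per J per i x *\<^sub>R ch (node J i))" by (simp only: dirK_expansion)
  finally show ?thesis using VVh_nodal_expansion[OF J_pos ch x] by simp
qed

lemma coordX_nonzero:
  assumes eta: "eta \<in> VVh_d J per PD P0 P1 P2" and nz: "coordX eta m \<noteq> 0"
  shows "m mod 4 < 2 \<and> free_dof m"
proof -
  have "m mod 4 < 2"
  proof (rule ccontr)
    assume "\<not> m mod 4 < 2"
    then have "dirX (m mod 4) = 0" by (simp add: dirX_def)
    then show False using nz by (simp add: coordX_def)
  qed
  moreover have "free_dof m"
    using nz eta unfolding free_dof_def coordX_def by (auto simp: dirX_def VVh_d_def VVh_d0_def)
  ultimately show ?thesis by simp
qed

lemma coordK_nonzero:
  assumes ch: "ch \<in> WW_sharp lumped J per P0" and nz: "coordK ch m \<noteq> 0"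
  shows "\<not> m mod 4 < 2 \<and> free_dof m"
proof -
  have "\<not> m mod 4 < 2" using nz by (auto simp: coordK_def dirK_def)
  moreover have "free_dof m"
    using nz WW_sharp_vanishes_P0[OF ch] unfolding free_dof_def coordK_def by (auto simp: dirK_def)
  ultimately show ?thesis by simp
qed

lemma synth_at_node:
  assumes i: "i < nnodes J per"
  shows "(\<Sum>m<ndofs. c m *\<^sub>R basisX m (node J i)) = c (i*4) *\<^sub>R e1 + c (i*4+1) *\<^sub>R e2"
    "(\<Sum>m<ndofs. c m *\<^sub>R basisK m (node J i)) = c (i*4+2) *\<^sub>R e1 + c (i*4+3) *\<^sub>R e2"
proof -
  have hn: "hat_per J per i' (node J i) = (if i' = i then 1 else 0)" if "i' < nnodes J per" for i'
    using hat_per_node[OF J_pos that i] .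
  show "(\<Sum>m<ndofs. c m *\<^sub>R basisX m (node J i)) = c (i*4) *\<^sub>R e1 + c (i*4+1) *\<^sub>R e2"
  proof -
    have "(\<Sum>m<ndofs. c m *\<^sub>R basisX m (node J i)) = (\<Sum>x<nnodes J per. if x = i then c (i*4) *\<^sub>R e1 + c (i*4+1) *\<^sub>R e2 else 0)"
      unfolding ndofs_def sum_blocks4 by (intro sum.cong refl) (auto simp: basisX_def dirX_def hn)
    then show ?thesis using i by simp
  qed
  show "(\<Sum>m<ndofs. c m *\<^sub>R basisK m (node J i)) = c (i*4+2) *\<^sub>R e1 + c (i*4+3) *\<^sub>R e2"
  proof -
    have "(\<Sum>m<ndofs. c m *\<^sub>R basisK m (node J i)) = (\<Sum>x<nnodes J per. if x = i then c (i*4+2) *\<^sub>R e1 + c (i*4+3) *\<^sub>R e2 else 0)"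
      unfolding ndofs_def sum_blocks4 by (intro sum.cong refl) (auto simp: basisK_def dirK_def hn)
    then show ?thesis using i by simp
  qed
qed

definition test_form :: "nat \<Rightarrow> (real \<Rightarrow> real \<times> real) \<Rightarrow> (real \<Rightarrow> real \<times> real) \<Rightarrow> real" where
  "test_form l d k = (if l mod 4 < 2 then eq2_form d k (basisX l) else eq1_form d k (basisK l))"

definition system_matrix :: "nat \<Rightarrow> nat \<Rightarrow> real" where
  "system_matrix l m = (if free_dof l then test_form l (basisX m) (basisK m) else (if l = m then 1 else 0))"

definition system_rhs :: "nat \<Rightarrow> real" where
  "system_rhs l = (if free_dof l \<and> l mod 4 < 2 then - eq2_load (basisX l) else 0)"

definition synthX :: "(nat \<Rightarrow> real) \<Rightarrow> real \<Rightarrow> real \<times> real" where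
  "synthX c = (\<lambda>x. \<Sum>m<ndofs. c m *\<^sub>R basisX m x)"

definition synthK :: "(nat \<Rightarrow> real) \<Rightarrow> real \<Rightarrow> real \<times> real" where
  "synthK c = (\<lambda>x. \<Sum>m<ndofs. c m *\<^sub>R basisK m x)"

lemma synthX_VVh: "synthX c \<in> VVh J per" unfolding synthX_def by (intro VVh_sum VVh_scale basisX_VVh) auto

lemma synthK_VVh: "synthK c \<in> VVh J per" unfolding synthK_def by (intro VVh_sum VVh_scale basisK_VVh) auto

lemma synthX_VVh_d: "(\<forall>m<ndofs. \<not> free_dof m \<longrightarrow> c m = 0) \<Longrightarrow> synthX c \<in> VVh_d J per PD P0 P1 P2"
  unfolding synthX_def by (rule VVh_d_lincomb) (use basisX_VVh_d in auto)

lemma synthK_WW_sharp: "(\<forall>m<ndofs. \<not> free_dof m \<longrightarrow> c m = 0) \<Longrightarrow> synthK c \<in> WW_sharp lumped J per P0"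
  unfolding synthK_def by (rule WW_sharp_lincomb) (use basisK_WW_sharp in auto)

lemma test_form_synth: "l < ndofs \<Longrightarrow> test_form l (synthX c) (synthK c) = (\<Sum>m<ndofs. c m * test_form l (basisX m) (basisK m))"
proof -
  assume l: "l < ndofs"
  show ?thesis
  proof (cases "l mod 4 < 2")
    case True
    show ?thesis unfolding test_form_def using True
      by simp (rule eq2_form_sum_unknowns, auto simp: synthX_def synthK_def intro: basisX_VVh basisK_VVh l)
  next
    case False
    show ?thesis unfolding test_form_def using False
      by simp (rule eq1_form_sum_unknowns, auto simp: synthX_def synthK_def intro: basisX_VVh basisK_VVh l)
  qed
qed

lemma eq1_form_vanishes:
  assumes d: "d \<in> VVh J per" and k: "k \<in> VVh J per"
    and T: "\<forall>l<ndofs. free_dof l \<and> \<not> l mod 4 < 2 \<longrightarrow> eq1_form d k (basisK l) = 0"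
  shows "\<forall>ch\<in>WW_sharp lumped J per P0. eq1_form d k ch = 0"
proof
  fix ch assume ch: "ch \<in> WW_sharp lumped J per P0"
  have "eq1_form d k ch = (\<Sum>m<ndofs. coordK ch m * eq1_form d k (basisK m))"
    by (rule eq1_form_sum_test[OF _ basisK_VVh d k]) (use basisK_expansion[OF WW_sharp_VVh[OF ch]] in auto)
  also have "\<dots> = 0"
  proof (rule sum.neutral, rule ballI)
    fix m assume m: "m \<in> {..<ndofs}"
    show "coordK ch m * eq1_form d k (basisK m) = 0"
    proof (cases "coordK ch m = 0")
      case False then show ?thesis using coordK_nonzero[OF ch False] T m by auto
    qed simp
  qed
  finally show "eq1_form d k ch = 0" .
qed

lemma eq2_vanishes:
  assumes d: "d \<in> VVh J per" and k: "k \<in> VVh J per"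
    and T: "\<forall>l<ndofs. free_dof l \<and> l mod 4 < 2 \<longrightarrow> eq2_form d k (basisX l) + a * eq2_load (basisX l) = 0"
  shows "\<forall>eta\<in>VVh_d J per PD P0 P1 P2. eq2_form d k eta + a * eq2_load eta = 0"
proof
  fix eta assume eta: "eta \<in> VVh_d J per PD P0 P1 P2"
  have r: "\<forall>x\<in>{0..1}. eta x = (\<Sum>m<ndofs. coordX eta m *\<^sub>R basisX m x)" using basisX_expansion[OF VVh_d_VVh[OF eta]] by auto
  have "eq2_form d k eta + a * eq2_load eta = (\<Sum>m<ndofs. coordX eta m * eq2_form d k (basisX m)) + a * (\<Sum>m<ndofs. coordX eta m * eq2_load (basisX m))"
    using eq2_form_sum_test[OF _ basisX_VVh d k r] eq2_load_sum[OF _ basisX_VVh r] by simp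
  also have "\<dots> = (\<Sum>m<ndofs. coordX eta m * (eq2_form d k (basisX m) + a * eq2_load (basisX m)))"
    by (simp add: sum.distrib sum_distrib_left algebra_simps)
  also have "\<dots> = 0"
  proof (rule sum.neutral, rule ballI)
    fix m assume m: "m \<in> {..<ndofs}"
    show "coordX eta m * (eq2_form d k (basisX m) + a * eq2_load (basisX m)) = 0"
    proof (cases "coordX eta m = 0")
      case False then show ?thesis using coordX_nonzero[OF eta False] T m by auto
    qed simp
  qed
  finally show "eq2_form d k eta + a * eq2_load eta = 0" .
qed

lemma synth_solves_scaled_system:
  assumes c: "\<forall>l<ndofs. (\<Sum>m<ndofs. system_matrix l m * c m) = a * system_rhs l"
  shows "synthX c \<in> VVh_d J per PD P0 P1 P2" "synthK c \<in> WW_sharp lumped J per P0"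
    "\<forall>ch\<in>WW_sharp lumped J per P0. eq1_form (synthX c) (synthK c) ch = 0"
    "\<forall>eta\<in>VVh_d J per PD P0 P1 P2. eq2_form (synthX c) (synthK c) eta + a * eq2_load eta = 0"
proof -
  have constrained: "\<forall>m<ndofs. \<not> free_dof m \<longrightarrow> c m = 0"
  proof (intro allI impI)
    fix m assume m: "m < ndofs" and "\<not> free_dof m"
    then have "(\<Sum>m'<ndofs. system_matrix m m' * c m') = (\<Sum>m'<ndofs. if m = m' then c m' else 0)"
      by (intro sum.cong refl) (simp add: system_matrix_def)
    then show "c m = 0" using c m \<open>\<not> free_dof m\<close> by (simp add: system_rhs_def)
  qed
  show "synthX c \<in> VVh_d J per PD P0 P1 P2" by (rule synthX_VVh_d[OF constrained])
  show "synthK c \<in> WW_sharp lumped J per P0" by (rule synthK_WW_sharp[OF constrained])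
  have T: "test_form l (synthX c) (synthK c) = a * system_rhs l" if l: "l < ndofs" "free_dof l" for l
  proof -
    have "test_form l (synthX c) (synthK c) = (\<Sum>m<ndofs. system_matrix l m * c m)"
      using test_form_synth[OF l(1)] l(2) by (simp add: system_matrix_def mult.commute)
    then show ?thesis using c l(1) by simp
  qed
  show "\<forall>ch\<in>WW_sharp lumped J per P0. eq1_form (synthX c) (synthK c) ch = 0"
  proof (rule eq1_form_vanishes[OF synthX_VVh synthK_VVh], intro allI impI)
    fix l assume "l < ndofs" "free_dof l \<and> \<not> l mod 4 < 2"
    then show "eq1_form (synthX c) (synthK c) (basisK l) = 0"
      using T[of l] by (simp add: test_form_def system_rhs_def)
  qed
  show "\<forall>eta\<in>VVh_d J per PD P0 P1 P2. eq2_form (synthX c) (synthK c) eta + a * eq2_load eta = 0"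
  proof (rule eq2_vanishes[OF synthX_VVh synthK_VVh], intro allI impI)
    fix l assume "l < ndofs" "free_dof l \<and> l mod 4 < 2"
    then show "eq2_form (synthX c) (synthK c) (basisX l) + a * eq2_load (basisX l) = 0"
      using T[of l] by (simp add: test_form_def system_rhs_def)
  qed
qed

lemma system_matrix_injective:
  assumes z: "\<forall>l<ndofs. (\<Sum>m<ndofs. system_matrix l m * c m) = 0"
  shows "\<forall>m<ndofs. c m = 0"
proof (intro allI impI)
  fix m assume m: "m < ndofs"
  have "\<forall>l<ndofs. (\<Sum>m<ndofs. system_matrix l m * c m) = 0 * system_rhs l" using z by simp
  note sol = synth_solves_scaled_system[OF this]
  have "\<forall>x\<in>{0..1}. synthX c x = 0 \<and> synthK c x = 0"
    by (rule homogeneous_solution_zero[OF sol(1,2,3)]) (use sol(4) in simp)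
  moreover have "node J (m div 4) \<in> {0..1}"
    using dof_index_lt_nnodes[OF m] node_in_unit[OF J_pos, of "m div 4"] by (auto simp: nnodes_def split: if_splits)
  ultimately have "synthX c (node J (m div 4)) = 0" "synthK c (node J (m div 4)) = 0" by auto
  then have "c (m div 4 * 4) = 0" "c (m div 4 * 4 + 1) = 0" "c (m div 4 * 4 + 2) = 0" "c (m div 4 * 4 + 3) = 0"
    using synth_at_node[OF dof_index_lt_nnodes[OF m], of c]
    by (simp_all add: synthX_def synthK_def e1_def e2_def zero_prod_def)
  moreover have "m = m div 4 * 4 \<or> m = m div 4 * 4 + 1 \<or> m = m div 4 * 4 + 2 \<or> m = m div 4 * 4 + 3"
    by presburger
  ultimately show "c m = 0" by auto
qed

lemma scheme_solvable:
  "\<exists>dX K. dX \<in> VVh_d J per PD P0 P1 P2 \<and> K \<in> WW_sharp lumped J per P0 \<and>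
      scheme_eqs lumped J per PD P0 P1 P2 rh dt Xm dX K"
proof -
  obtain c where "\<forall>l<ndofs. (\<Sum>m<ndofs. system_matrix l m * c m) = 1 * system_rhs l"
    using square_system_solvable_if_injective[of ndofs system_matrix system_rhs] system_matrix_injective by auto
  note sol = synth_solves_scaled_system[OF this]
  have "scheme_eqs lumped J per PD P0 P1 P2 rh dt Xm (synthX c) (synthK c)"
    using sol(3,4) scheme_eqs_iff_forms[OF synthX_VVh synthK_VVh, of c c] by simp
  then show ?thesis using sol(1,2) by blast
qed

end

theorem lemma4p4:
  fixes lumped per :: bool and J :: nat and PD P0 P1 P2 :: "real set"
    and rh :: "real \<Rightarrow> real" and dt :: real and Xm :: "real \<Rightarrow> real \<times> real"
  assumes "J \<ge> 3"
    and "boundary_partition per PD P0 P1 P2"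
    and "\<forall>p\<in>{0, 1}. \<bar>rh p\<bar> \<le> 1"
    and "Xm \<in> VVh_d0 J per P0"
    and "AE x in lborel. x \<in> {0<..<1} \<longrightarrow> norm (drho Xm x) > 0"
    and "\<forall>\<rho>\<in>{0..1} - P0. Xm \<rho> \<bullet> e1 > 0"
    and "dt > 0"
  shows "\<exists>dX K. dX \<in> VVh_d J per PD P0 P1 P2 \<and> K \<in> WW_sharp lumped J per P0 \<and>
            scheme_eqs lumped J per PD P0 P1 P2 rh dt Xm dX K \<and>
            (\<forall>dX' K'. dX' \<in> VVh_d J per PD P0 P1 P2 \<and> K' \<in> WW_sharp lumped J per P0 \<and>
               scheme_eqs lumped J per PD P0 P1 P2 rh dt Xm dX' K' \<longrightarrow>
               (\<forall>x\<in>{0..1}. dX' x = dX x \<and> K' x = K x))"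
proof -
  interpret scheme_data lumped per J PD P0 P1 P2 rh dt Xm
    using assms by unfold_locales auto
  show ?thesis using scheme_solvable scheme_unique by blast
qed

end
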